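(* Let $P:\mathcal X\to\mathcal B$ be a fibration with fibered pullbacks, let $(p,P)$ and $(q,P)$ be pointed fibrations, and let $\alpha:p\Rightarrow q$ be a natural transformation with $P$-vertical components. Then: (i) for every object $(I,x:X\to qI)$ of the total category of $P/q$, taking the pullback of $x$ along $\alpha_I:pI\to qI$, giving $x':X'\to pI$, defines an assignment $(I,x)\mapsto(I,x':X'\to pI)$ which extends to a fibered functor $\alpha^*:P/q\to_{\mathcal B}P/p$; (ii) the assignment $(I,x:X\to pI)\mapsto(I,\alpha_I\circ x:X\to qI)$ on objects of the total category of $P/p$ (and $(u,f)\mapsto(u,f)$ on morphisms) extends to a fibered functor $\Sigma_\alpha:P/p\to_{\mathcal B}P/q$; (iii) there is a fibered adjunction $\Sigma_\alpha\dashv\alpha^*$ between $P/p$ and $P/q$ in $\mathbf{Fib}(\mathcal B)$.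
   Context: For $P:\mathcal X\to\mathcal B$: $f:X\to Y$ is $P$-cartesian if for every $v:K\to PX$ and $g:Z\to Y$ with $Pg=Pf\circ v$ there is a unique $h:Z\to X$ with $fh=g$, $Ph=v$; $P$ is a fibration if every $Y$ and $u:I\to PY$ admit a cartesian $f$ with $Pf=u$; $f$ is $P$-vertical if $Pf$ is an identity; the fiber $P_I$ consists of morphisms over $1_I$. $P$ has fibered pullbacks if each fiber has pullbacks stable under reindexing. Fibered functors between fibrations over $\mathcal B$ commute with projections and preserve cartesian morphisms; a fibered adjunction is an adjunction between fibered functors with vertical unit and counit; $\mathbf{Fib}(\mathcal B)$ is the 2-category of fibrations over $\mathcal B$, fibered functors and vertical natural transformations. A pointed fibration $(p,P)$ is a fibration with a functor $p:\mathcal B\to\mathcal X$, $Pp=1_{\mathcal B}$, sending every morphism to a $P$-cartesian morphism. The slice fibration $P/p:\mathcal Y\to\mathcal B$: objects of $\mathcal Y$ are pairs $(I,x:X\to pI)$ with $x$ $P$-vertical over $I$; morphisms $(I,x)\to(J,y)$ are pairs $(u,f)$ with $u:I\to J$ in $\mathcal B$, $f:X\to Y$ in $\mathcal X$, $y\circ f=pu\circ x$; $P/p$ is the first projection (it is the change of base of the codomain fibration $\mathbf{cod}_P:V(P)\to\mathcal X$, on $P$-vertical arrows, along $p$). Its cartesian morphisms are those $(u,f)$ whose square $y f=pu\, x$ is a pullback in $\mathcal X$. The pullback in (i) is taken in the fiber $P_I$. *)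

theory Defs
  imports Main
begin

text \<open>A category: objects, arrows, domain, codomain, identities, composition.
  Cp C g f denotes the composite g o f.\<close>

record ('o, 'm) cat =
  Ob :: "'o set"
  Ar :: "'m set"
  Dm :: "'m \<Rightarrow> 'o"
  Cd :: "'m \<Rightarrow> 'o"
  Idt :: "'o \<Rightarrow> 'm"
  Cp :: "'m \<Rightarrow> 'm \<Rightarrow> 'm"

definition hom :: "('o, 'm) cat \<Rightarrow> 'o \<Rightarrow> 'o \<Rightarrow> 'm set" where
  "hom C a b = {f \<in> Ar C. Dm C f = a \<and> Cd C f = b}"

definition is_category :: "('o, 'm) cat \<Rightarrow> bool" where
  "is_category C \<longleftrightarrow>
     (\<forall>f\<in>Ar C. Dm C f \<in> Ob C \<and> Cd C f \<in> Ob C) \<and>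
     (\<forall>a\<in>Ob C. Idt C a \<in> hom C a a) \<and>
     (\<forall>f\<in>Ar C. \<forall>g\<in>Ar C. Cd C f = Dm C g \<longrightarrow> Cp C g f \<in> hom C (Dm C f) (Cd C g)) \<and>
     (\<forall>f\<in>Ar C. Cp C (Idt C (Cd C f)) f = f \<and> Cp C f (Idt C (Dm C f)) = f) \<and>
     (\<forall>f\<in>Ar C. \<forall>g\<in>Ar C. \<forall>h\<in>Ar C. Cd C f = Dm C g \<and> Cd C g = Dm C h \<longrightarrow>
         Cp C h (Cp C g f) = Cp C (Cp C h g) f)"

definition is_functor :: "('o1, 'm1) cat \<Rightarrow> ('o2, 'm2) cat \<Rightarrow> ('o1 \<Rightarrow> 'o2) \<Rightarrow> ('m1 \<Rightarrow> 'm2) \<Rightarrow> bool" where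
  "is_functor C D Fo Fa \<longleftrightarrow> is_category C \<and> is_category D \<and>
     (\<forall>a\<in>Ob C. Fo a \<in> Ob D) \<and>
     (\<forall>f\<in>Ar C. Fa f \<in> hom D (Fo (Dm C f)) (Fo (Cd C f))) \<and>
     (\<forall>a\<in>Ob C. Fa (Idt C a) = Idt D (Fo a)) \<and>
     (\<forall>f\<in>Ar C. \<forall>g\<in>Ar C. Cd C f = Dm C g \<longrightarrow> Fa (Cp C g f) = Cp D (Fa g) (Fa f))"

definition is_pullback :: "('o, 'm) cat \<Rightarrow> 'm \<Rightarrow> 'm \<Rightarrow> 'm \<Rightarrow> 'm \<Rightarrow> bool" where
  "is_pullback C a b pa pb \<longleftrightarrow>
     a \<in> Ar C \<and> b \<in> Ar C \<and> pa \<in> Ar C \<and> pb \<in> Ar C \<and>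
     Cd C a = Cd C b \<and> Cd C pa = Dm C a \<and> Cd C pb = Dm C b \<and> Dm C pa = Dm C pb \<and>
     Cp C a pa = Cp C b pb \<and>
     (\<forall>h\<in>Ar C. \<forall>k\<in>Ar C. Dm C h = Dm C k \<and> Cd C h = Dm C a \<and> Cd C k = Dm C b \<and>
        Cp C a h = Cp C b k \<longrightarrow>
        (\<exists>!m. m \<in> Ar C \<and> Dm C m = Dm C h \<and> Cd C m = Dm C pa \<and>
               Cp C pa m = h \<and> Cp C pb m = k))"

definition has_pullbacks :: "('o, 'm) cat \<Rightarrow> bool" where
  "has_pullbacks C \<longleftrightarrow>
     (\<forall>a\<in>Ar C. \<forall>b\<in>Ar C. Cd C a = Cd C b \<longrightarrow> (\<exists>pa pb. is_pullback C a b pa pb))"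

definition cartesian :: "('x, 'f) cat \<Rightarrow> ('i, 'u) cat \<Rightarrow> ('x \<Rightarrow> 'i) \<Rightarrow> ('f \<Rightarrow> 'u) \<Rightarrow> 'f \<Rightarrow> bool" where
  "cartesian X B Po Pa f \<longleftrightarrow> f \<in> Ar X \<and>
     (\<forall>v\<in>Ar B. \<forall>g\<in>Ar X.
        Cd X g = Cd X f \<and> Cd B v = Po (Dm X f) \<and> Pa g = Cp B (Pa f) v \<longrightarrow>
        (\<exists>!h. h \<in> Ar X \<and> Dm X h = Dm X g \<and> Cd X h = Dm X f \<and> Cp X f h = g \<and> Pa h = v))"

definition is_fibration :: "('x, 'f) cat \<Rightarrow> ('i, 'u) cat \<Rightarrow> ('x \<Rightarrow> 'i) \<Rightarrow> ('f \<Rightarrow> 'u) \<Rightarrow> bool" where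
  "is_fibration X B Po Pa \<longleftrightarrow> is_functor X B Po Pa \<and>
     (\<forall>Y\<in>Ob X. \<forall>u\<in>Ar B. Cd B u = Po Y \<longrightarrow>
        (\<exists>f. Cd X f = Y \<and> Pa f = u \<and> cartesian X B Po Pa f))"

definition fiber :: "('x, 'f) cat \<Rightarrow> ('i, 'u) cat \<Rightarrow> ('x \<Rightarrow> 'i) \<Rightarrow> ('f \<Rightarrow> 'u) \<Rightarrow> 'i \<Rightarrow> ('x, 'f) cat" where
  "fiber X B Po Pa I =
     \<lparr>Ob = {a \<in> Ob X. Po a = I}, Ar = {f \<in> Ar X. Pa f = Idt B I},
      Dm = Dm X, Cd = Cd X, Idt = Idt X, Cp = Cp X\<rparr>"

text \<open>Fibered pullbacks: each fiber has pullbacks, and reindexing along any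
  u : I -> J (via cartesian lifts over u of the four corners and the induced
  vertical maps) sends pullback squares in P_J to pullback squares in P_I.\<close>

definition fibered_pullbacks :: "('x, 'f) cat \<Rightarrow> ('i, 'u) cat \<Rightarrow> ('x \<Rightarrow> 'i) \<Rightarrow> ('f \<Rightarrow> 'u) \<Rightarrow> bool" where
  "fibered_pullbacks X B Po Pa \<longleftrightarrow>
     (\<forall>I\<in>Ob B. has_pullbacks (fiber X B Po Pa I)) \<and>
     (\<forall>u\<in>Ar B. \<forall>a b pa pb cA cB cC cD a' b' pa' pb'.
        is_pullback (fiber X B Po Pa (Cd B u)) a b pa pb \<and>
        cartesian X B Po Pa cA \<and> Pa cA = u \<and> Cd X cA = Dm X a \<and>
        cartesian X B Po Pa cB \<and> Pa cB = u \<and> Cd X cB = Dm X b \<and>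
        cartesian X B Po Pa cC \<and> Pa cC = u \<and> Cd X cC = Cd X a \<and>
        cartesian X B Po Pa cD \<and> Pa cD = u \<and> Cd X cD = Dm X pa \<and>
        a' \<in> Ar (fiber X B Po Pa (Dm B u)) \<and> Dm X a' = Dm X cA \<and> Cd X a' = Dm X cC \<and>
          Cp X cC a' = Cp X a cA \<and>
        b' \<in> Ar (fiber X B Po Pa (Dm B u)) \<and> Dm X b' = Dm X cB \<and> Cd X b' = Dm X cC \<and>
          Cp X cC b' = Cp X b cB \<and>
        pa' \<in> Ar (fiber X B Po Pa (Dm B u)) \<and> Dm X pa' = Dm X cD \<and> Cd X pa' = Dm X cA \<and>
          Cp X cA pa' = Cp X pa cD \<and>
        pb' \<in> Ar (fiber X B Po Pa (Dm B u)) \<and> Dm X pb' = Dm X cD \<and> Cd X pb' = Dm X cB \<and>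
          Cp X cB pb' = Cp X pb cD
        \<longrightarrow> is_pullback (fiber X B Po Pa (Dm B u)) a' b' pa' pb')"

definition is_pointed :: "('x, 'f) cat \<Rightarrow> ('i, 'u) cat \<Rightarrow> ('x \<Rightarrow> 'i) \<Rightarrow> ('f \<Rightarrow> 'u)
    \<Rightarrow> ('i \<Rightarrow> 'x) \<Rightarrow> ('u \<Rightarrow> 'f) \<Rightarrow> bool" where
  "is_pointed X B Po Pa po pa \<longleftrightarrow> is_fibration X B Po Pa \<and> is_functor B X po pa \<and>
     (\<forall>I\<in>Ob B. Po (po I) = I) \<and>
     (\<forall>u\<in>Ar B. Pa (pa u) = u \<and> cartesian X B Po Pa (pa u))"

definition vertical_nat_trans :: "('x, 'f) cat \<Rightarrow> ('i, 'u) cat \<Rightarrow> ('x \<Rightarrow> 'i) \<Rightarrow> ('f \<Rightarrow> 'u)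
    \<Rightarrow> ('i \<Rightarrow> 'x) \<Rightarrow> ('u \<Rightarrow> 'f) \<Rightarrow> ('i \<Rightarrow> 'x) \<Rightarrow> ('u \<Rightarrow> 'f) \<Rightarrow> ('i \<Rightarrow> 'f) \<Rightarrow> bool" where
  "vertical_nat_trans X B Po Pa po pa qo qa \<alpha> \<longleftrightarrow>
     (\<forall>I\<in>Ob B. \<alpha> I \<in> hom X (po I) (qo I) \<and> Pa (\<alpha> I) = Idt B I) \<and>
     (\<forall>u\<in>Ar B. Cp X (qa u) (\<alpha> (Dm B u)) = Cp X (\<alpha> (Cd B u)) (pa u))"

text \<open>Morphisms (I,x) -> (J,y): pairs (u,f) with y o f = pu o x; a morphism is stored
  together with its source and target as (source, (u,f), target).\<close>

definition slice :: "('x, 'f) cat \<Rightarrow> ('i, 'u) cat \<Rightarrow> ('x \<Rightarrow> 'i) \<Rightarrow> ('f \<Rightarrow> 'u)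
    \<Rightarrow> ('i \<Rightarrow> 'x) \<Rightarrow> ('u \<Rightarrow> 'f)
    \<Rightarrow> ('i \<times> 'f, ('i \<times> 'f) \<times> ('u \<times> 'f) \<times> ('i \<times> 'f)) cat" where
  "slice X B Po Pa po pa =
    (let Obs = {(I, x). I \<in> Ob B \<and> x \<in> Ar X \<and> Cd X x = po I \<and> Pa x = Idt B I} in
     \<lparr>Ob = Obs,
      Ar = {(s, (u, f), t). s \<in> Obs \<and> t \<in> Obs \<and> u \<in> hom B (fst s) (fst t) \<and>
                f \<in> hom X (Dm X (snd s)) (Dm X (snd t)) \<and>
                Cp X (snd t) f = Cp X (pa u) (snd s)},
      Dm = (\<lambda>m. fst m),
      Cd = (\<lambda>m. snd (snd m)),
      Idt = (\<lambda>s. (s, (Idt B (fst s), Idt X (Dm X (snd s))), s)),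
      Cp = (\<lambda>g f. (fst f, (Cp B (fst (fst (snd g))) (fst (fst (snd f))),
                           Cp X (snd (fst (snd g))) (snd (fst (snd f)))), snd (snd g)))\<rparr>)"

definition slice_proj_o :: "'i \<times> 'f \<Rightarrow> 'i" where
  "slice_proj_o s = fst s"

definition slice_proj_a :: "('i \<times> 'f) \<times> ('u \<times> 'f) \<times> ('i \<times> 'f) \<Rightarrow> 'u" where
  "slice_proj_a m = fst (fst (snd m))"

definition fibered_functor :: "('i, 'u) cat
    \<Rightarrow> ('a, 'b) cat \<Rightarrow> ('a \<Rightarrow> 'i) \<Rightarrow> ('b \<Rightarrow> 'u)
    \<Rightarrow> ('c, 'd) cat \<Rightarrow> ('c \<Rightarrow> 'i) \<Rightarrow> ('d \<Rightarrow> 'u)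
    \<Rightarrow> ('a \<Rightarrow> 'c) \<Rightarrow> ('b \<Rightarrow> 'd) \<Rightarrow> bool" where
  "fibered_functor B Y1 Q1o Q1a Y2 Q2o Q2a Fo Fa \<longleftrightarrow>
     is_fibration Y1 B Q1o Q1a \<and> is_fibration Y2 B Q2o Q2a \<and>
     is_functor Y1 Y2 Fo Fa \<and>
     (\<forall>a\<in>Ob Y1. Q2o (Fo a) = Q1o a) \<and>
     (\<forall>m\<in>Ar Y1. Q2a (Fa m) = Q1a m) \<and>
     (\<forall>m\<in>Ar Y1. cartesian Y1 B Q1o Q1a m \<longrightarrow> cartesian Y2 B Q2o Q2a (Fa m))"

definition fibered_adjunction :: "('i, 'u) cat
    \<Rightarrow> ('a, 'b) cat \<Rightarrow> ('a \<Rightarrow> 'i) \<Rightarrow> ('b \<Rightarrow> 'u)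
    \<Rightarrow> ('c, 'd) cat \<Rightarrow> ('c \<Rightarrow> 'i) \<Rightarrow> ('d \<Rightarrow> 'u)
    \<Rightarrow> ('a \<Rightarrow> 'c) \<Rightarrow> ('b \<Rightarrow> 'd) \<Rightarrow> ('c \<Rightarrow> 'a) \<Rightarrow> ('d \<Rightarrow> 'b) \<Rightarrow> bool" where
  "fibered_adjunction B Y1 Q1o Q1a Y2 Q2o Q2a Go Ga Fo Fa \<longleftrightarrow>
     fibered_functor B Y1 Q1o Q1a Y2 Q2o Q2a Go Ga \<and>
     fibered_functor B Y2 Q2o Q2a Y1 Q1o Q1a Fo Fa \<and>
     (\<exists>\<eta> \<epsilon>.
        (\<forall>a\<in>Ob Y1. \<eta> a \<in> hom Y1 a (Fo (Go a)) \<and> Q1a (\<eta> a) = Idt B (Q1o a)) \<and>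
        (\<forall>m\<in>Ar Y1. Cp Y1 (Fa (Ga m)) (\<eta> (Dm Y1 m)) = Cp Y1 (\<eta> (Cd Y1 m)) m) \<and>
        (\<forall>b\<in>Ob Y2. \<epsilon> b \<in> hom Y2 (Go (Fo b)) b \<and> Q2a (\<epsilon> b) = Idt B (Q2o b)) \<and>
        (\<forall>m\<in>Ar Y2. Cp Y2 m (\<epsilon> (Dm Y2 m)) = Cp Y2 (\<epsilon> (Cd Y2 m)) (Ga (Fa m))) \<and>
        (\<forall>a\<in>Ob Y1. Cp Y2 (\<epsilon> (Go a)) (Ga (\<eta> a)) = Idt Y2 (Go a)) \<and>
        (\<forall>b\<in>Ob Y2. Cp Y1 (Fa (\<epsilon> b)) (\<eta> (Fo b)) = Idt Y1 (Fo b)))"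

definition sigma_o :: "('x, 'f) cat \<Rightarrow> ('i \<Rightarrow> 'f) \<Rightarrow> 'i \<times> 'f \<Rightarrow> 'i \<times> 'f" where
  "sigma_o X \<alpha> s = (fst s, Cp X (\<alpha> (fst s)) (snd s))"

definition sigma_a :: "('x, 'f) cat \<Rightarrow> ('i \<Rightarrow> 'f)
    \<Rightarrow> ('i \<times> 'f) \<times> ('u \<times> 'f) \<times> ('i \<times> 'f) \<Rightarrow> ('i \<times> 'f) \<times> ('u \<times> 'f) \<times> ('i \<times> 'f)" where
  "sigma_a X \<alpha> m = (sigma_o X \<alpha> (fst m), fst (snd m), sigma_o X \<alpha> (snd (snd m)))"

end

theory Submission
  imports Defs
begin

text \<open>
  \<open>\<Sigma>\<^sub>\<alpha>\<close> postcomposes with the vertical components of \<open>\<alpha>\<close>; naturality of \<open>\<alpha>\<close> makes it a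
  functor over \<open>B\<close>, and it is fibered because an arrow \<open>(u, f)\<close> of a slice fibration is
  cartesian exactly when \<open>f\<close> is \<open>P\<close>-cartesian (the point \<open>p u\<close> being cartesian).

  \<open>\<alpha>\<^sup>*\<close> pulls \<open>x\<close> back along \<open>\<alpha>\<^sub>I\<close> inside the fiber over \<open>I\<close>. The crucial fact is that, when
  \<open>P\<close> has fibered pullbacks, a pullback square in a fiber is a pullback in all of \<open>X\<close>: a cone
  over it lies over some \<open>w : K \<rightarrow> I\<close>; factoring the cone through cartesian lifts over \<open>w\<close>
  gives a vertical cone over the square reindexed along \<open>w\<close>, which is again a pullback.
  Hence \<open>\<alpha>\<^sup>*\<close> acts on arrows through the universal property, and uniqueness of induced maps
  gives functoriality, preservation of cartesian arrows (lift the two legs of a cone along the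
  cartesian arrows \<open>f\<close> and \<open>p u\<close>), naturality of the unit \<open>(1, x)\<close> and of the counit
  (the pullback projection), and the triangle identities.
\<close>

section \<open>Categories and pullbacks\<close>

locale category =
  fixes C :: "('o, 'm) cat"
  assumes is_category: "is_category C"
begin

lemma Dm_in_Ob [simp]: "f \<in> Ar C \<Longrightarrow> Dm C f \<in> Ob C"
  using is_category unfolding is_category_def by blast

lemma Cd_in_Ob [simp]: "f \<in> Ar C \<Longrightarrow> Cd C f \<in> Ob C"
  using is_category unfolding is_category_def by blast

lemma Idt_in_Ar [simp]: "a \<in> Ob C \<Longrightarrow> Idt C a \<in> Ar C"
  using is_category unfolding is_category_def hom_def by blast

lemma Dm_Idt [simp]: "a \<in> Ob C \<Longrightarrow> Dm C (Idt C a) = a"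
  using is_category unfolding is_category_def hom_def by blast

lemma Cd_Idt [simp]: "a \<in> Ob C \<Longrightarrow> Cd C (Idt C a) = a"
  using is_category unfolding is_category_def hom_def by blast

lemma Cp_in_Ar [simp]: "f \<in> Ar C \<Longrightarrow> g \<in> Ar C \<Longrightarrow> Cd C f = Dm C g \<Longrightarrow> Cp C g f \<in> Ar C"
  using is_category unfolding is_category_def hom_def by blast

lemma Dm_Cp [simp]: "f \<in> Ar C \<Longrightarrow> g \<in> Ar C \<Longrightarrow> Cd C f = Dm C g \<Longrightarrow> Dm C (Cp C g f) = Dm C f"
  using is_category unfolding is_category_def hom_def by blast

lemma Cd_Cp [simp]: "f \<in> Ar C \<Longrightarrow> g \<in> Ar C \<Longrightarrow> Cd C f = Dm C g \<Longrightarrow> Cd C (Cp C g f) = Cd C g"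
  using is_category unfolding is_category_def hom_def by blast

lemma Cp_Idt_left [simp]: "f \<in> Ar C \<Longrightarrow> Cd C f = b \<Longrightarrow> Cp C (Idt C b) f = f"
  using is_category unfolding is_category_def by blast

lemma Cp_Idt_right [simp]: "f \<in> Ar C \<Longrightarrow> Dm C f = a \<Longrightarrow> Cp C f (Idt C a) = f"
  using is_category unfolding is_category_def by blast

lemma Cp_assoc:
  "f \<in> Ar C \<Longrightarrow> g \<in> Ar C \<Longrightarrow> h \<in> Ar C \<Longrightarrow> Cd C f = Dm C g \<Longrightarrow> Cd C g = Dm C h \<Longrightarrow>
   Cp C h (Cp C g f) = Cp C (Cp C h g) f"
  using is_category unfolding is_category_def by blast

lemma Cp_reassoc:
  assumes "Cp C g f = Cp C g' f'"
    and "f \<in> Ar C" "g \<in> Ar C" "f' \<in> Ar C" "g' \<in> Ar C" "h \<in> Ar C"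
    and "Cd C f = Dm C g" "Cd C f' = Dm C g'" "Cd C h = Dm C f" "Cd C h = Dm C f'"
  shows "Cp C g (Cp C f h) = Cp C g' (Cp C f' h)"
  using assms by (metis Cp_assoc)

end

definition pullback_factor :: "('o, 'm) cat \<Rightarrow> 'm \<Rightarrow> 'm \<Rightarrow> 'm \<Rightarrow> 'm \<Rightarrow> 'm" where
  "pullback_factor C pa pb h k =
     (THE m. m \<in> Ar C \<and> Dm C m = Dm C h \<and> Cd C m = Dm C pa \<and> Cp C pa m = h \<and> Cp C pb m = k)"

lemma pullbackD:
  assumes "is_pullback C a b pa pb"
  shows "a \<in> Ar C" "b \<in> Ar C" "pa \<in> Ar C" "pb \<in> Ar C" "Cd C a = Cd C b"
    "Cd C pa = Dm C a" "Cd C pb = Dm C b" "Dm C pb = Dm C pa" "Cp C a pa = Cp C b pb"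
  using assms unfolding is_pullback_def by auto

lemma pullback_universal:
  assumes "is_pullback C a b pa pb"
    and "h \<in> Ar C" "k \<in> Ar C" "Dm C h = Dm C k" "Cd C h = Dm C a" "Cd C k = Dm C b"
    and "Cp C a h = Cp C b k"
  shows "\<exists>!m. m \<in> Ar C \<and> Dm C m = Dm C h \<and> Cd C m = Dm C pa \<and> Cp C pa m = h \<and> Cp C pb m = k"
  using assms unfolding is_pullback_def by blast

lemma pullback_factor:
  assumes "is_pullback C a b pa pb"
    and "h \<in> Ar C" "k \<in> Ar C" "Dm C h = Dm C k" "Cd C h = Dm C a" "Cd C k = Dm C b"
    and "Cp C a h = Cp C b k"
  shows "pullback_factor C pa pb h k \<in> Ar C" "Dm C (pullback_factor C pa pb h k) = Dm C h"
    "Cd C (pullback_factor C pa pb h k) = Dm C pa"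
    "Cp C pa (pullback_factor C pa pb h k) = h" "Cp C pb (pullback_factor C pa pb h k) = k"
proof -
  from theI'[OF pullback_universal[OF assms]] show "pullback_factor C pa pb h k \<in> Ar C"
    "Dm C (pullback_factor C pa pb h k) = Dm C h" "Cd C (pullback_factor C pa pb h k) = Dm C pa"
    "Cp C pa (pullback_factor C pa pb h k) = h" "Cp C pb (pullback_factor C pa pb h k) = k"
    unfolding pullback_factor_def by blast+
qed

lemma is_pullbackI:
  assumes "a \<in> Ar C" "b \<in> Ar C" "pa \<in> Ar C" "pb \<in> Ar C" "Cd C a = Cd C b"
    "Cd C pa = Dm C a" "Cd C pb = Dm C b" "Dm C pa = Dm C pb" "Cp C a pa = Cp C b pb"
    and factor: "\<And>h k. h \<in> Ar C \<Longrightarrow> k \<in> Ar C \<Longrightarrow> Dm C h = Dm C k \<Longrightarrow> Cd C h = Dm C a \<Longrightarrow>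
      Cd C k = Dm C b \<Longrightarrow> Cp C a h = Cp C b k \<Longrightarrow>
      \<exists>m. m \<in> Ar C \<and> Dm C m = Dm C h \<and> Cd C m = Dm C pa \<and> Cp C pa m = h \<and> Cp C pb m = k"
    and jointly_monic: "\<And>m m'. m \<in> Ar C \<Longrightarrow> m' \<in> Ar C \<Longrightarrow> Dm C m = Dm C m' \<Longrightarrow>
      Cd C m = Dm C pa \<Longrightarrow> Cd C m' = Dm C pa \<Longrightarrow> Cp C pa m = Cp C pa m' \<Longrightarrow>
      Cp C pb m = Cp C pb m' \<Longrightarrow> m = m'"
  shows "is_pullback C a b pa pb"
  unfolding is_pullback_def
proof (intro conjI ballI impI)
  fix h k
  assume "h \<in> Ar C" "k \<in> Ar C" and cone: "Dm C h = Dm C k \<and> Cd C h = Dm C a \<and> Cd C k = Dm C b \<and>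
    Cp C a h = Cp C b k"
  with factor obtain m where "m \<in> Ar C \<and> Dm C m = Dm C h \<and> Cd C m = Dm C pa \<and>
    Cp C pa m = h \<and> Cp C pb m = k" by blast
  with jointly_monic show "\<exists>!m. m \<in> Ar C \<and> Dm C m = Dm C h \<and> Cd C m = Dm C pa \<and>
    Cp C pa m = h \<and> Cp C pb m = k" by metis
qed (use assms in auto)

lemma (in category) pullback_arrow_eqI:
  assumes pb: "is_pullback C a b pa pb"
    and m: "m \<in> Ar C" "Cd C m = Dm C pa"
    and "m' \<in> Ar C" "Dm C m = Dm C m'" "Cd C m' = Dm C pa"
    and "Cp C pa m = Cp C pa m'" "Cp C pb m = Cp C pb m'"
  shows "m = m'"
proof -
  note sq = pullbackD[OF pb]
  have "Cp C a (Cp C pa m) = Cp C (Cp C a pa) m"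
    using sq m by (intro Cp_assoc) auto
  also have "\<dots> = Cp C b (Cp C pb m)"
    using sq m by (simp add: Cp_assoc)
  finally have cone: "Cp C a (Cp C pa m) = Cp C b (Cp C pb m)" .
  have "\<exists>!n. n \<in> Ar C \<and> Dm C n = Dm C m \<and> Cd C n = Dm C pa \<and>
      Cp C pa n = Cp C pa m \<and> Cp C pb n = Cp C pb m"
    using pullback_universal[OF pb _ _ _ _ _ cone] sq m by simp
  then show ?thesis
    using assms sq by auto
qed

section \<open>Fibrations with fibered pullbacks\<close>

lemma fiber_simps [simp]:
  "Ob (fiber X B Po Pa I) = {a \<in> Ob X. Po a = I}"
  "Ar (fiber X B Po Pa I) = {f \<in> Ar X. Pa f = Idt B I}"
  "Dm (fiber X B Po Pa I) = Dm X" "Cd (fiber X B Po Pa I) = Cd X"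
  "Idt (fiber X B Po Pa I) = Idt X" "Cp (fiber X B Po Pa I) = Cp X"
  unfolding fiber_def by simp_all

lemma cartesian_in_Ar: "cartesian X B Po Pa f \<Longrightarrow> f \<in> Ar X"
  unfolding cartesian_def by blast

lemma cartesian_factor:
  assumes "cartesian X B Po Pa f" "v \<in> Ar B" "g \<in> Ar X" "Cd X g = Cd X f"
    "Cd B v = Po (Dm X f)" "Pa g = Cp B (Pa f) v"
  obtains h where "h \<in> Ar X" "Dm X h = Dm X g" "Cd X h = Dm X f" "Cp X f h = g" "Pa h = v"
  using assms unfolding cartesian_def by metis

lemma cartesianI:
  assumes "f \<in> Ar X"
    and factor: "\<And>v g. v \<in> Ar B \<Longrightarrow> g \<in> Ar X \<Longrightarrow> Cd X g = Cd X f \<Longrightarrow> Cd B v = Po (Dm X f) \<Longrightarrow>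
      Pa g = Cp B (Pa f) v \<Longrightarrow>
      \<exists>h. h \<in> Ar X \<and> Dm X h = Dm X g \<and> Cd X h = Dm X f \<and> Cp X f h = g \<and> Pa h = v"
    and cancel: "\<And>h h'. h \<in> Ar X \<Longrightarrow> h' \<in> Ar X \<Longrightarrow> Dm X h = Dm X h' \<Longrightarrow>
      Cd X h = Dm X f \<Longrightarrow> Cd X h' = Dm X f \<Longrightarrow> Cp X f h = Cp X f h' \<Longrightarrow> Pa h = Pa h' \<Longrightarrow> h = h'"
  shows "cartesian X B Po Pa f"
  unfolding cartesian_def
proof (intro conjI ballI impI)
  fix v g
  assume "v \<in> Ar B" "g \<in> Ar X"
    and "Cd X g = Cd X f \<and> Cd B v = Po (Dm X f) \<and> Pa g = Cp B (Pa f) v"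
  with factor obtain h where "h \<in> Ar X \<and> Dm X h = Dm X g \<and> Cd X h = Dm X f \<and> Cp X f h = g \<and> Pa h = v"
    by blast
  with cancel show "\<exists>!h. h \<in> Ar X \<and> Dm X h = Dm X g \<and> Cd X h = Dm X f \<and> Cp X f h = g \<and> Pa h = v"
    by metis
qed (rule assms(1))

lemma cartesian_cancel:
  assumes P: "is_functor X B Po Pa" and f: "cartesian X B Po Pa f"
    and "Cp X f h = Cp X f h'" "Pa h = Pa h'"
    and h: "h \<in> Ar X" "Cd X h = Dm X f" and "h' \<in> Ar X" "Dm X h = Dm X h'" "Cd X h' = Dm X f"
  shows "h = h'"
proof -
  interpret X: category X
    using P unfolding is_functor_def category_def by blast
  have "f \<in> Ar X"
    using f by (rule cartesian_in_Ar)
  then have Ph: "Pa h \<in> Ar B" "Cd B (Pa h) = Po (Dm X f)" "Pa (Cp X f h) = Cp B (Pa f) (Pa h)"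
    using P h unfolding is_functor_def hom_def by auto
  have univ: "\<forall>v\<in>Ar B. \<forall>g\<in>Ar X. Cd X g = Cd X f \<and> Cd B v = Po (Dm X f) \<and>
      Pa g = Cp B (Pa f) v \<longrightarrow>
      (\<exists>!k. k \<in> Ar X \<and> Dm X k = Dm X g \<and> Cd X k = Dm X f \<and> Cp X f k = g \<and> Pa k = v)"
    using f unfolding cartesian_def by blast
  have "\<exists>!k. k \<in> Ar X \<and> Dm X k = Dm X (Cp X f h) \<and> Cd X k = Dm X f \<and>
      Cp X f k = Cp X f h \<and> Pa k = Pa h"
    by (rule univ[rule_format]) (use Ph \<open>f \<in> Ar X\<close> h in auto)
  then show ?thesis
    using assms \<open>f \<in> Ar X\<close> by auto
qed

locale fibration =
  fixes X :: "('x, 'f) cat" and B :: "('i, 'u) cat" and Po :: "'x \<Rightarrow> 'i" and Pa :: "'f \<Rightarrow> 'u"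
  assumes is_fibration: "is_fibration X B Po Pa"
begin

lemma is_functor: "is_functor X B Po Pa"
  using is_fibration unfolding is_fibration_def by blast

sublocale X: category X
  using is_functor unfolding is_functor_def category_def by blast

sublocale B: category B
  using is_functor unfolding is_functor_def category_def by blast

lemma Pa_in_Ar [simp]: "f \<in> Ar X \<Longrightarrow> Pa f \<in> Ar B"
  using is_functor unfolding is_functor_def hom_def by blast

text \<open>
  Simp orients \<open>Po\<close> on domains towards \<open>B\<close> but \<open>Cd B (Pa f)\<close> towards \<open>X\<close>: then the base codomain
  of \<open>h\<close> is computed through the arrow whose domain \<open>h\<close> hits, e.g. a vertical one.
\<close>

lemma Po_Dm [simp]: "f \<in> Ar X \<Longrightarrow> Po (Dm X f) = Dm B (Pa f)"
  using is_functor unfolding is_functor_def hom_def by simp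

lemma Cd_Pa [simp]: "f \<in> Ar X \<Longrightarrow> Cd B (Pa f) = Po (Cd X f)"
  using is_functor unfolding is_functor_def hom_def by simp

lemma Pa_Idt [simp]: "a \<in> Ob X \<Longrightarrow> Pa (Idt X a) = Idt B (Po a)"
  using is_functor unfolding is_functor_def by blast

lemma Pa_Cp [simp]:
  "f \<in> Ar X \<Longrightarrow> g \<in> Ar X \<Longrightarrow> Cd X f = Dm X g \<Longrightarrow> Pa (Cp X g f) = Cp B (Pa g) (Pa f)"
  using is_functor unfolding is_functor_def by blast

lemma cartesian_lift_exists:
  assumes "Y \<in> Ob X" "u \<in> Ar B" "Cd B u = Po Y"
  obtains c where "cartesian X B Po Pa c" "Cd X c = Y" "Pa c = u"
  using assms is_fibration unfolding is_fibration_def by metis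

lemma cartesian_vertical_factor:
  assumes f: "cartesian X B Po Pa f" and "g \<in> Ar X" "Cd X g = Cd X f" "Pa g = Pa f"
  obtains h where "h \<in> Ar X" "Dm X h = Dm X g" "Cd X h = Dm X f" "Cp X f h = g"
    "Pa h = Idt B (Dm B (Pa f))"
proof -
  have "f \<in> Ar X"
    using f by (rule cartesian_in_Ar)
  show ?thesis
    by (rule cartesian_factor[OF f, of "Idt B (Dm B (Pa f))" g])
      (use assms that \<open>f \<in> Ar X\<close> in auto)
qed

lemma Po_Cd_vertical: "f \<in> Ar X \<Longrightarrow> Pa f = Idt B I \<Longrightarrow> I \<in> Ob B \<Longrightarrow> Po (Cd X f) = I"
  by (metis Cd_Pa B.Cd_Idt)

lemma category_fiber: "I \<in> Ob B \<Longrightarrow> is_category (fiber X B Po Pa I)"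
  unfolding is_category_def hom_def by (auto simp: X.Cp_assoc Po_Cd_vertical)

lemma reindex_fiber_pullback:
  assumes fpb: "fibered_pullbacks X B Po Pa" and w: "w \<in> Ar B"
    and pb: "is_pullback (fiber X B Po Pa (Cd B w)) a b pa pb"
  obtains cA cB cC cD a' b' pa' pb' where
    "cartesian X B Po Pa cA" "Pa cA = w" "Cd X cA = Dm X a"
    "cartesian X B Po Pa cB" "Pa cB = w" "Cd X cB = Dm X b"
    "cartesian X B Po Pa cC" "Pa cC = w" "Cd X cC = Cd X a"
    "cartesian X B Po Pa cD" "Pa cD = w" "Cd X cD = Dm X pa"
    "Dm X a' = Dm X cA" "Cd X a' = Dm X cC" "Cp X cC a' = Cp X a cA"
    "Dm X b' = Dm X cB" "Cd X b' = Dm X cC" "Cp X cC b' = Cp X b cB"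
    "Dm X pa' = Dm X cD" "Cd X pa' = Dm X cA" "Cp X cA pa' = Cp X pa cD"
    "Dm X pb' = Dm X cD" "Cd X pb' = Dm X cB" "Cp X cB pb' = Cp X pb cD"
    "is_pullback (fiber X B Po Pa (Dm B w)) a' b' pa' pb'"
proof -
  note sq = pullbackD[OF pb, simplified]
  have lift: "\<exists>c. cartesian X B Po Pa c \<and> Cd X c = Y \<and> Pa c = w"
    if "Y \<in> Ob X" "Po Y = Cd B w" for Y
    using cartesian_lift_exists[of Y w] that w by metis
  have vert: "\<exists>f'. f' \<in> Ar (fiber X B Po Pa (Dm B w)) \<and> Dm X f' = Dm X c \<and> Cd X f' = Dm X c' \<and>
      Cp X c' f' = Cp X f c"
    if f: "f \<in> Ar X" "Pa f = Idt B (Cd B w)"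
      and c: "cartesian X B Po Pa c" "Pa c = w" "Cd X c = Dm X f"
      and c': "cartesian X B Po Pa c'" "Pa c' = w" "Cd X c' = Cd X f" for f c c'
  proof -
    have "c \<in> Ar X" "c' \<in> Ar X"
      using c(1) c'(1) by (simp_all add: cartesian_in_Ar)
    obtain f' where "f' \<in> Ar X" "Dm X f' = Dm X (Cp X f c)" "Cd X f' = Dm X c'"
      "Cp X c' f' = Cp X f c" "Pa f' = Idt B (Dm B (Pa c'))"
      by (rule cartesian_vertical_factor[OF c'(1), of "Cp X f c"])
        (use f c c' w \<open>c \<in> Ar X\<close> in auto)
    then show ?thesis
      using f c c' \<open>c \<in> Ar X\<close> by auto
  qed
  obtain cA where cA: "cartesian X B Po Pa cA" "Cd X cA = Dm X a" "Pa cA = w"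
    using lift[of "Dm X a"] sq w by auto
  obtain cB where cB: "cartesian X B Po Pa cB" "Cd X cB = Dm X b" "Pa cB = w"
    using lift[of "Dm X b"] sq w by auto
  obtain cC where cC: "cartesian X B Po Pa cC" "Cd X cC = Cd X a" "Pa cC = w"
    using lift[of "Cd X a"] sq w Po_Cd_vertical[of a] by auto
  obtain cD where cD: "cartesian X B Po Pa cD" "Cd X cD = Dm X pa" "Pa cD = w"
    using lift[of "Dm X pa"] sq w by auto
  obtain a' where a': "a' \<in> Ar (fiber X B Po Pa (Dm B w))" "Dm X a' = Dm X cA" "Cd X a' = Dm X cC"
    "Cp X cC a' = Cp X a cA"
    using vert[of a cA cC] sq cA cC by auto
  obtain b' where b': "b' \<in> Ar (fiber X B Po Pa (Dm B w))" "Dm X b' = Dm X cB" "Cd X b' = Dm X cC"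
    "Cp X cC b' = Cp X b cB"
    using vert[of b cB cC] sq cB cC by auto
  obtain pa' where pa': "pa' \<in> Ar (fiber X B Po Pa (Dm B w))" "Dm X pa' = Dm X cD"
    "Cd X pa' = Dm X cA" "Cp X cA pa' = Cp X pa cD"
    using vert[of pa cD cA] sq cD cA by auto
  obtain pb' where pb': "pb' \<in> Ar (fiber X B Po Pa (Dm B w))" "Dm X pb' = Dm X cD"
    "Cd X pb' = Dm X cB" "Cp X cB pb' = Cp X pb cD"
    using vert[of pb cD cB] sq cD cB by auto
  have "is_pullback (fiber X B Po Pa (Dm B w)) a' b' pa' pb'"
    using fpb w pb cA cB cC cD a' b' pa' pb' unfolding fibered_pullbacks_def by blast
  with that cA cB cC cD a' b' pa' pb' show ?thesis
    by blast
qed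

lemma fiber_pullback_factor_exists:
  assumes fpb: "fibered_pullbacks X B Po Pa" and J: "J \<in> Ob B"
    and pb: "is_pullback (fiber X B Po Pa J) a b pa pb"
    and h: "h \<in> Ar X" "Cd X h = Dm X a" and k: "k \<in> Ar X" "Cd X k = Dm X b"
    and hk: "Dm X h = Dm X k" "Cp X a h = Cp X b k"
  shows "\<exists>m. m \<in> Ar X \<and> Dm X m = Dm X h \<and> Cd X m = Dm X pa \<and> Cp X pa m = h \<and> Cp X pb m = k"
proof -
  note sq = pullbackD[OF pb, simplified]
  define w where "w = Pa h"
  have w: "w \<in> Ar B" "Cd B w = J"
    using h sq J by (simp_all add: w_def)
  have "Pa k = Pa (Cp X b k)"
    using k sq J by simp
  also have "\<dots> = w"
    using hk h sq J by (simp flip: hk(2) add: w_def)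
  finally have Pk: "Pa k = w" .
  obtain cA cB cC cD a' b' pa' pb' where
    cA: "cartesian X B Po Pa cA" "Pa cA = w" "Cd X cA = Dm X a" and
    cB: "cartesian X B Po Pa cB" "Pa cB = w" "Cd X cB = Dm X b" and
    cC: "cartesian X B Po Pa cC" "Pa cC = w" "Cd X cC = Cd X a" and
    cD: "cartesian X B Po Pa cD" "Pa cD = w" "Cd X cD = Dm X pa" and
    a': "Dm X a' = Dm X cA" "Cd X a' = Dm X cC" "Cp X cC a' = Cp X a cA" and
    b': "Dm X b' = Dm X cB" "Cd X b' = Dm X cC" "Cp X cC b' = Cp X b cB" and
    pa': "Dm X pa' = Dm X cD" "Cd X pa' = Dm X cA" "Cp X cA pa' = Cp X pa cD" and
    pb': "Dm X pb' = Dm X cD" "Cd X pb' = Dm X cB" "Cp X cB pb' = Cp X pb cD" and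
    pbw: "is_pullback (fiber X B Po Pa (Dm B w)) a' b' pa' pb'"
    by (rule reindex_fiber_pullback[OF fpb w(1)]) (use pb w in simp_all)
  note sq' = pullbackD[OF pbw, simplified]
  have cAr: "cA \<in> Ar X" "cB \<in> Ar X" "cC \<in> Ar X" "cD \<in> Ar X"
    using cA cB cC cD by (simp_all add: cartesian_in_Ar)
  obtain m1 where m1: "m1 \<in> Ar X" "Dm X m1 = Dm X h" "Cd X m1 = Dm X cA" "Cp X cA m1 = h"
    "Pa m1 = Idt B (Dm B w)"
    by (rule cartesian_vertical_factor[OF cA(1) h(1)]) (use h cA in \<open>simp_all add: w_def\<close>)
  obtain m2 where m2: "m2 \<in> Ar X" "Dm X m2 = Dm X k" "Cd X m2 = Dm X cB" "Cp X cB m2 = k"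
    "Pa m2 = Idt B (Dm B w)"
    by (rule cartesian_vertical_factor[OF cB(1) k(1)]) (use k cB Pk in simp_all)
  have "Cp X cC (Cp X a' m1) = Cp X a (Cp X cA m1)"
    by (rule X.Cp_reassoc[OF a'(3)]) (use sq sq' cAr a' m1 cA cC in simp_all)
  also have "\<dots> = Cp X cC (Cp X b' m2)"
    using X.Cp_reassoc[OF b'(3)] sq sq' cAr b' m2 cB cC m1 hk by simp
  finally have "Cp X a' m1 = Cp X b' m2"
    by (rule cartesian_cancel[OF is_functor cC(1)]) (use sq' cAr a' b' m1 m2 hk in simp_all)
  then obtain n where n: "n \<in> Ar X" "Pa n = Idt B (Dm B w)" "Dm X n = Dm X m1"
    "Cd X n = Dm X pa'" "Cp X pa' n = m1" "Cp X pb' n = m2"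
    using pullback_factor[OF pbw, of m1 m2] sq' m1 m2 a' b' hk by auto
  have "Cp X cA (Cp X pa' n) = Cp X pa (Cp X cD n)"
    by (rule X.Cp_reassoc[OF pa'(3)]) (use sq sq' cAr pa' n cD in simp_all)
  moreover have "Cp X cB (Cp X pb' n) = Cp X pb (Cp X cD n)"
    by (rule X.Cp_reassoc[OF pb'(3)]) (use sq sq' cAr pb' n cD in simp_all)
  ultimately have "Cp X pa (Cp X cD n) = h" "Cp X pb (Cp X cD n) = k"
    using n m1 m2 by simp_all
  then show ?thesis
    using n cAr cD pa' m1 by (intro exI[of _ "Cp X cD n"]) simp
qed

lemma fiber_pullback_jointly_monic:
  assumes fpb: "fibered_pullbacks X B Po Pa" and J: "J \<in> Ob B"
    and pb: "is_pullback (fiber X B Po Pa J) a b pa pb"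
    and m: "m \<in> Ar X" "Cd X m = Dm X pa" and m': "m' \<in> Ar X" "Cd X m' = Dm X pa"
    and mm': "Dm X m = Dm X m'" "Cp X pa m = Cp X pa m'" "Cp X pb m = Cp X pb m'"
  shows "m = m'"
proof -
  note sq = pullbackD[OF pb, simplified]
  define w where "w = Pa m"
  have w: "w \<in> Ar B" "Cd B w = J"
    using m sq J by (simp_all add: w_def)
  have "Pa m' = Pa (Cp X pa m')"
    using m' sq J by simp
  also have "\<dots> = w"
    using m sq J by (simp flip: mm'(2) add: w_def)
  finally have Pm': "Pa m' = w" .
  obtain cA cB cC cD a' b' pa' pb' where
    cA: "cartesian X B Po Pa cA" "Pa cA = w" "Cd X cA = Dm X a" and
    cB: "cartesian X B Po Pa cB" "Pa cB = w" "Cd X cB = Dm X b" and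
    "cartesian X B Po Pa cC" "Pa cC = w" "Cd X cC = Cd X a" and
    cD: "cartesian X B Po Pa cD" "Pa cD = w" "Cd X cD = Dm X pa" and
    "Dm X a' = Dm X cA" "Cd X a' = Dm X cC" "Cp X cC a' = Cp X a cA" and
    "Dm X b' = Dm X cB" "Cd X b' = Dm X cC" "Cp X cC b' = Cp X b cB" and
    pa': "Dm X pa' = Dm X cD" "Cd X pa' = Dm X cA" "Cp X cA pa' = Cp X pa cD" and
    pb': "Dm X pb' = Dm X cD" "Cd X pb' = Dm X cB" "Cp X cB pb' = Cp X pb cD" and
    pbw: "is_pullback (fiber X B Po Pa (Dm B w)) a' b' pa' pb'"
    by (rule reindex_fiber_pullback[OF fpb w(1)]) (use pb w in simp_all)
  note sq' = pullbackD[OF pbw, simplified]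
  have cAr: "cA \<in> Ar X" "cB \<in> Ar X" "cD \<in> Ar X"
    using cA cB cD by (simp_all add: cartesian_in_Ar)
  obtain n where n: "n \<in> Ar X" "Dm X n = Dm X m" "Cd X n = Dm X cD" "Cp X cD n = m"
    "Pa n = Idt B (Dm B w)"
    by (rule cartesian_vertical_factor[OF cD(1) m(1)]) (use m cD in \<open>simp_all add: w_def\<close>)
  obtain n' where n': "n' \<in> Ar X" "Dm X n' = Dm X m'" "Cd X n' = Dm X cD" "Cp X cD n' = m'"
    "Pa n' = Idt B (Dm B w)"
    by (rule cartesian_vertical_factor[OF cD(1) m'(1)]) (use m' cD Pm' in simp_all)
  have "Cp X cA (Cp X pa' n) = Cp X cA (Cp X pa' n')"
    using X.Cp_reassoc[OF pa'(3)] sq sq' cAr pa' n n' cD mm' by simp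
  then have pa'n: "Cp X pa' n = Cp X pa' n'"
    by (rule cartesian_cancel[OF is_functor cA(1)]) (use sq' pa' n n' mm' in simp_all)
  have "Cp X cB (Cp X pb' n) = Cp X cB (Cp X pb' n')"
    using X.Cp_reassoc[OF pb'(3)] sq sq' cAr pb' n n' cD mm' by simp
  then have pb'n: "Cp X pb' n = Cp X pb' n'"
    by (rule cartesian_cancel[OF is_functor cB(1)]) (use sq' pb' n n' mm' in simp_all)
  interpret F: category "fiber X B Po Pa (Dm B w)"
    using category_fiber w by (simp add: category_def)
  have "n = n'"
    by (rule F.pullback_arrow_eqI[OF pbw]) (use n n' pa' pa'n pb'n mm' in simp_all)
  then show ?thesis
    using n n' by simp
qed

lemma fiber_pullback_is_pullback:
  assumes "fibered_pullbacks X B Po Pa" "J \<in> Ob B" "is_pullback (fiber X B Po Pa J) a b pa pb"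
  shows "is_pullback X a b pa pb"
  using pullbackD[OF assms(3), simplified]
    fiber_pullback_factor_exists[OF assms] fiber_pullback_jointly_monic[OF assms]
  by (intro is_pullbackI) auto

end

section \<open>The slice fibration\<close>

lemma slice_arrow_exhaust:
  obtains I x u f J y where "m = ((I, x), (u, f), (J, y))"
  by (metis prod.collapse)

lemma slice_proj_o_conv [simp]: "slice_proj_o (I, x) = I"
  by (simp add: slice_proj_o_def)

lemma slice_proj_a_conv [simp]: "slice_proj_a (s, (u, f), t) = u"
  by (simp add: slice_proj_a_def)

locale pointed_fibration = fibration X B Po Pa
  for X :: "('x, 'f) cat" and B :: "('i, 'u) cat" and Po :: "'x \<Rightarrow> 'i" and Pa :: "'f \<Rightarrow> 'u" +
  fixes r :: "'i \<Rightarrow> 'x" and ra :: "'u \<Rightarrow> 'f"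
  assumes is_pointed: "is_pointed X B Po Pa r ra"
begin

lemma is_functor_point: "is_functor B X r ra"
  using is_pointed unfolding is_pointed_def by blast

lemma r_in_Ob [simp]: "I \<in> Ob B \<Longrightarrow> r I \<in> Ob X"
  using is_functor_point unfolding is_functor_def by blast

lemma Po_r [simp]: "I \<in> Ob B \<Longrightarrow> Po (r I) = I"
  using is_pointed unfolding is_pointed_def by blast

lemma ra_in_Ar [simp]: "u \<in> Ar B \<Longrightarrow> ra u \<in> Ar X"
  using is_functor_point unfolding is_functor_def hom_def by blast

lemma Dm_ra [simp]: "u \<in> Ar B \<Longrightarrow> Dm X (ra u) = r (Dm B u)"
  using is_functor_point unfolding is_functor_def hom_def by blast

lemma Cd_ra [simp]: "u \<in> Ar B \<Longrightarrow> Cd X (ra u) = r (Cd B u)"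
  using is_functor_point unfolding is_functor_def hom_def by blast

lemma ra_Idt [simp]: "I \<in> Ob B \<Longrightarrow> ra (Idt B I) = Idt X (r I)"
  using is_functor_point unfolding is_functor_def by blast

lemma ra_Cp: "u \<in> Ar B \<Longrightarrow> v \<in> Ar B \<Longrightarrow> Cd B u = Dm B v \<Longrightarrow> ra (Cp B v u) = Cp X (ra v) (ra u)"
  using is_functor_point unfolding is_functor_def by blast

lemma Pa_ra [simp]: "u \<in> Ar B \<Longrightarrow> Pa (ra u) = u"
  using is_pointed unfolding is_pointed_def by blast

lemma cartesian_ra: "u \<in> Ar B \<Longrightarrow> cartesian X B Po Pa (ra u)"
  using is_pointed unfolding is_pointed_def by blast

abbreviation S where "S \<equiv> slice X B Po Pa r ra"

lemma slice_Ob_iff [simp]: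
  "(I, x) \<in> Ob S \<longleftrightarrow> I \<in> Ob B \<and> x \<in> Ar X \<and> Cd X x = r I \<and> Pa x = Idt B I"
  unfolding slice_def Let_def by simp

lemma slice_Ar_iff [simp]:
  "((I, x), (u, f), (J, y)) \<in> Ar S \<longleftrightarrow> (I, x) \<in> Ob S \<and> (J, y) \<in> Ob S \<and>
     u \<in> Ar B \<and> Dm B u = I \<and> Cd B u = J \<and> f \<in> Ar X \<and> Dm X f = Dm X x \<and> Cd X f = Dm X y \<and>
     Cp X y f = Cp X (ra u) x"
  unfolding slice_def Let_def hom_def by auto

lemma slice_Dm [simp]: "Dm S m = fst m"
  unfolding slice_def Let_def by simp

lemma slice_Cd [simp]: "Cd S m = snd (snd m)"
  unfolding slice_def Let_def by simp

lemma slice_Idt [simp]: "Idt S (I, x) = ((I, x), (Idt B I, Idt X (Dm X x)), (I, x))"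
  unfolding slice_def Let_def by simp

lemma slice_Cp [simp]:
  "Cp S ((K, z), (w, g), (J, y)) ((I, x), (u, f), (J', y')) = ((I, x), (Cp B w u, Cp X g f), (J, y))"
  unfolding slice_def Let_def by simp

lemma slice_Ar_Pa:
  assumes "((I, x), (u, f), (J, y)) \<in> Ar S"
  shows "Pa f = u"
proof -
  have m: "(I, x) \<in> Ob S" "(J, y) \<in> Ob S" "u \<in> Ar B" "Dm B u = I" "Cd B u = J" "f \<in> Ar X"
    "Dm X f = Dm X x" "Cd X f = Dm X y" and sq: "Cp X y f = Cp X (ra u) x"
    using assms by simp_all
  have "Pa f = Pa (Cp X y f)"
    using m by simp
  also have "\<dots> = u"
    using m by (simp add: sq)
  finally show ?thesis .
qed

lemma slice_Cp_in_Ar: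
  assumes m: "((I, x), (u, f), (J, y)) \<in> Ar S" and n: "((J, y), (v, g), (K, z)) \<in> Ar S"
  shows "((I, x), (Cp B v u, Cp X g f), (K, z)) \<in> Ar S"
proof -
  have "Cp X z (Cp X g f) = Cp X (ra v) (Cp X y f)"
    by (rule X.Cp_reassoc) (use m n in simp_all)
  also have "\<dots> = Cp X (ra (Cp B v u)) x"
    using m n by (simp add: ra_Cp X.Cp_assoc)
  finally show ?thesis
    using m n by simp
qed

lemma is_category_slice: "is_category S"
  unfolding is_category_def
proof (intro conjI ballI impI)
  fix m assume "m \<in> Ar S"
  then show "Dm S m \<in> Ob S" "Cd S m \<in> Ob S"
    by (cases m rule: slice_arrow_exhaust, simp)+
next
  fix a assume "a \<in> Ob S"
  then show "Idt S a \<in> hom S a a"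
    by (cases a) (simp add: hom_def)
next
  fix m n assume "m \<in> Ar S" "n \<in> Ar S" "Cd S m = Dm S n"
  then show "Cp S n m \<in> hom S (Dm S m) (Cd S n)"
    by (cases m rule: slice_arrow_exhaust, cases n rule: slice_arrow_exhaust)
      (auto simp: hom_def simp del: slice_Ar_iff intro: slice_Cp_in_Ar)
next
  fix m assume "m \<in> Ar S"
  then show "Cp S (Idt S (Cd S m)) m = m" "Cp S m (Idt S (Dm S m)) = m"
    by (cases m rule: slice_arrow_exhaust, simp)+
next
  fix m n k assume "m \<in> Ar S" "n \<in> Ar S" "k \<in> Ar S" "Cd S m = Dm S n \<and> Cd S n = Dm S k"
  then show "Cp S k (Cp S n m) = Cp S (Cp S k n) m"
    by (cases m rule: slice_arrow_exhaust, cases n rule: slice_arrow_exhaust,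
        cases k rule: slice_arrow_exhaust) (auto simp: B.Cp_assoc X.Cp_assoc)
qed

lemma is_functor_slice_proj: "is_functor S B slice_proj_o slice_proj_a"
  unfolding is_functor_def
proof (intro conjI ballI impI is_category_slice B.is_category)
  fix a assume "a \<in> Ob S"
  then show "slice_proj_o a \<in> Ob B" "slice_proj_a (Idt S a) = Idt B (slice_proj_o a)"
    by (cases a, simp)+
next
  fix m assume "m \<in> Ar S"
  then show "slice_proj_a m \<in> hom B (slice_proj_o (Dm S m)) (slice_proj_o (Cd S m))"
    by (cases m rule: slice_arrow_exhaust) (simp add: hom_def)
next
  fix m n assume "m \<in> Ar S" "n \<in> Ar S" "Cd S m = Dm S n"
  then show "slice_proj_a (Cp S n m) = Cp B (slice_proj_a n) (slice_proj_a m)"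
    by (cases m rule: slice_arrow_exhaust, cases n rule: slice_arrow_exhaust) simp
qed

text \<open>The square of \<open>(v, h)\<close> follows from that of the composite because \<open>ra u\<close> is cartesian.\<close>

lemma slice_Ar_right_factor:
  assumes m: "((I, x), (u, f), (J, y)) \<in> Ar S"
    and comp: "((K, z), (Cp B u v, Cp X f h), (J, y)) \<in> Ar S"
    and v: "v \<in> Ar B" "Cd B v = I"
    and h: "h \<in> Ar X" "Dm X h = Dm X z" "Cd X h = Dm X x" "Pa h = v"
  shows "((K, z), (v, h), (I, x)) \<in> Ar S"
proof -
  have u: "u \<in> Ar B"
    using m by simp
  have "Cp X (ra u) (Cp X x h) = Cp X y (Cp X f h)"
    by (rule X.Cp_reassoc) (use m h in simp_all)
  also have "\<dots> = Cp X (ra (Cp B u v)) z"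
    using comp by (simp only: slice_Ar_iff)
  also have "\<dots> = Cp X (ra u) (Cp X (ra v) z)"
    using m v comp by (simp add: ra_Cp X.Cp_assoc)
  finally have "Cp X x h = Cp X (ra v) z"
    by (rule cartesian_cancel[OF is_functor cartesian_ra[OF u]]) (use m v comp h in simp_all)
  then show ?thesis
    using m v comp h by simp
qed

lemma slice_Ar_into:
  assumes "(I, x) \<in> Ob S" "h \<in> Ar X" "Cd X h = Dm X x"
  shows "\<exists>z. ((Dm B (Pa h), z), (Pa h, h), (I, x)) \<in> Ar S"
proof -
  have Ph: "Pa h \<in> Ar B" "Cd B (Pa h) = I"
    using assms by simp_all
  obtain z where "z \<in> Ar X" "Dm X z = Dm X h" "Cd X z = r (Dm B (Pa h))"
    "Cp X (ra (Pa h)) z = Cp X x h" "Pa z = Idt B (Dm B (Pa h))"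
    by (rule cartesian_vertical_factor[OF cartesian_ra[OF Ph(1)], of "Cp X x h"])
      (use assms Ph in simp_all)
  then show ?thesis
    using assms Ph by (intro exI[of _ z]) simp
qed

lemma cartesian_slice_if_cartesian:
  assumes m: "((I, x), (u, f), (J, y)) \<in> Ar S" and f: "cartesian X B Po Pa f"
  shows "cartesian S B slice_proj_o slice_proj_a ((I, x), (u, f), (J, y))"
proof (rule cartesianI[OF m])
  have Pf: "Pa f = u"
    using m by (rule slice_Ar_Pa)
  fix v gg
  assume v: "v \<in> Ar B" and "gg \<in> Ar S" "Cd S gg = Cd S ((I, x), (u, f), (J, y))"
    and "Cd B v = slice_proj_o (Dm S ((I, x), (u, f), (J, y)))"
    and "slice_proj_a gg = Cp B (slice_proj_a ((I, x), (u, f), (J, y))) v"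
  then obtain K z g where gg: "gg = ((K, z), (Cp B u v, g), (J, y))"
    and g: "((K, z), (Cp B u v, g), (J, y)) \<in> Ar S" and vI: "Cd B v = I"
    by (cases gg rule: slice_arrow_exhaust) auto
  obtain h where h: "h \<in> Ar X" "Dm X h = Dm X g" "Cd X h = Dm X f" "Cp X f h = g" "Pa h = v"
    by (rule cartesian_factor[OF f v, of g]) (use m g vI Pf slice_Ar_Pa[OF g] in simp_all)
  have "((K, z), (v, h), (I, x)) \<in> Ar S"
    by (rule slice_Ar_right_factor[OF m]) (use g h v vI m in simp_all)
  then show "\<exists>hh. hh \<in> Ar S \<and> Dm S hh = Dm S gg \<and> Cd S hh = Dm S ((I, x), (u, f), (J, y)) \<and>
      Cp S ((I, x), (u, f), (J, y)) hh = gg \<and> slice_proj_a hh = v"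
    using gg h by (intro exI[of _ "((K, z), (v, h), (I, x))"]) simp
next
  fix hh hh'
  assume "hh \<in> Ar S" "hh' \<in> Ar S" "Dm S hh = Dm S hh'"
    and "Cd S hh = Dm S ((I, x), (u, f), (J, y))" "Cd S hh' = Dm S ((I, x), (u, f), (J, y))"
    and "Cp S ((I, x), (u, f), (J, y)) hh = Cp S ((I, x), (u, f), (J, y)) hh'"
    and "slice_proj_a hh = slice_proj_a hh'"
  then obtain K z v h h' where hh: "hh = ((K, z), (v, h), (I, x))" "hh' = ((K, z), (v, h'), (I, x))"
    and h: "((K, z), (v, h), (I, x)) \<in> Ar S" and h': "((K, z), (v, h'), (I, x)) \<in> Ar S"
    and fh: "Cp X f h = Cp X f h'"
    by (cases hh rule: slice_arrow_exhaust, cases hh' rule: slice_arrow_exhaust) auto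
  have "h = h'"
    by (rule cartesian_cancel[OF is_functor f fh])
      (use h h' m slice_Ar_Pa[OF h] slice_Ar_Pa[OF h'] in simp_all)
  then show "hh = hh'"
    using hh by simp
qed

lemma cartesian_of_cartesian_slice:
  assumes m: "((I, x), (u, f), (J, y)) \<in> Ar S"
    and c: "cartesian S B slice_proj_o slice_proj_a ((I, x), (u, f), (J, y))"
  shows "cartesian X B Po Pa f"
proof (rule cartesianI)
  show "f \<in> Ar X"
    using m by simp
  have Pf: "Pa f = u"
    using m by (rule slice_Ar_Pa)
  fix v g
  assume v: "v \<in> Ar B" and g: "g \<in> Ar X" "Cd X g = Cd X f"
    and "Cd B v = Po (Dm X f)" and Pg: "Pa g = Cp B (Pa f) v"
  then have vI: "Cd B v = I"
    using m by simp
  have "\<exists>z. ((Dm B (Pa g), z), (Pa g, g), (J, y)) \<in> Ar S"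
    by (rule slice_Ar_into) (use m g in simp_all)
  then obtain z where "((Dm B (Pa g), z), (Pa g, g), (J, y)) \<in> Ar S" ..
  then have gS: "((Dm B v, z), (Cp B u v, g), (J, y)) \<in> Ar S"
    using m v vI Pg Pf by simp
  obtain hh where "hh \<in> Ar S" "Dm S hh = (Dm B v, z)" "Cd S hh = (I, x)"
    and "Cp S ((I, x), (u, f), (J, y)) hh = ((Dm B v, z), (Cp B u v, g), (J, y))"
    and "slice_proj_a hh = v"
    by (rule cartesian_factor[OF c v gS]) (use vI in simp_all)
  then obtain h where h: "((Dm B v, z), (v, h), (I, x)) \<in> Ar S" "Cp X f h = g"
    by (cases hh rule: slice_arrow_exhaust) auto
  then show "\<exists>h. h \<in> Ar X \<and> Dm X h = Dm X g \<and> Cd X h = Dm X f \<and> Cp X f h = g \<and> Pa h = v"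
    using slice_Ar_Pa[OF h(1)] m gS by (intro exI[of _ h]) simp
next
  fix h h'
  assume h: "h \<in> Ar X" "Cd X h = Dm X f" and h': "h' \<in> Ar X" "Dm X h = Dm X h'" "Cd X h' = Dm X f"
    and fh: "Cp X f h = Cp X f h'" and Ph: "Pa h = Pa h'"
  have "\<exists>z. ((Dm B (Pa h), z), (Pa h, h), (I, x)) \<in> Ar S"
    by (rule slice_Ar_into) (use m h in simp_all)
  then obtain z where hS: "((Dm B (Pa h), z), (Pa h, h), (I, x)) \<in> Ar S" ..
  have "((Dm B (Pa h), z), (Cp B u (Pa h), Cp X f h'), (J, y)) \<in> Ar S"
    using slice_Cp_in_Ar[OF hS m] fh by simp
  then have h'S: "((Dm B (Pa h), z), (Pa h, h'), (I, x)) \<in> Ar S"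
    by (rule slice_Ar_right_factor[OF m]) (use h' h Ph hS m in simp_all)
  have "((Dm B (Pa h), z), (Pa h, h), (I, x)) = ((Dm B (Pa h), z), (Pa h, h'), (I, x))"
    by (rule cartesian_cancel[OF is_functor_slice_proj c]) (use fh hS h'S in simp_all)
  then show "h = h'"
    by simp
qed

lemma cartesian_slice_iff:
  assumes "((I, x), (u, f), (J, y)) \<in> Ar S"
  shows "cartesian S B slice_proj_o slice_proj_a ((I, x), (u, f), (J, y)) \<longleftrightarrow> cartesian X B Po Pa f"
  using cartesian_slice_if_cartesian[OF assms] cartesian_of_cartesian_slice[OF assms] by blast

lemma is_fibration_slice: "is_fibration S B slice_proj_o slice_proj_a"
  unfolding is_fibration_def
proof (intro conjI ballI impI is_functor_slice_proj)
  fix Y u assume "Y \<in> Ob S" and u: "u \<in> Ar B" and "Cd B u = slice_proj_o Y"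
  then obtain y where Y: "Y = (Cd B u, y)" and y: "(Cd B u, y) \<in> Ob S"
    by (cases Y) auto
  obtain c where c: "cartesian X B Po Pa c" "Cd X c = Dm X y" "Pa c = u"
    by (rule cartesian_lift_exists[of "Dm X y" u]) (use u y in simp_all)
  have "\<exists>y'. ((Dm B (Pa c), y'), (Pa c, c), (Cd B u, y)) \<in> Ar S"
    by (rule slice_Ar_into) (use y c cartesian_in_Ar[OF c(1)] in simp_all)
  then obtain y' where "((Dm B (Pa c), y'), (Pa c, c), (Cd B u, y)) \<in> Ar S" ..
  then have cS: "((Dm B u, y'), (u, c), (Cd B u, y)) \<in> Ar S"
    using c(3) by simp
  then show "\<exists>f. Cd S f = Y \<and> slice_proj_a f = u \<and> cartesian S B slice_proj_o slice_proj_a f"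
    using cartesian_slice_if_cartesian[OF cS c(1)] Y
    by (intro exI[of _ "((Dm B u, y'), (u, c), (Cd B u, y))"]) simp
qed

end

section \<open>The adjunction \<open>\<Sigma>\<^sub>\<alpha> \<stileturn> \<alpha>\<^sup>*\<close>\<close>

locale slice_base_change =
  p: pointed_fibration X B Po Pa po pa + q: pointed_fibration X B Po Pa qo qa
  for X :: "('x, 'f) cat" and B :: "('i, 'u) cat" and Po :: "'x \<Rightarrow> 'i" and Pa :: "'f \<Rightarrow> 'u"
    and po :: "'i \<Rightarrow> 'x" and pa :: "'u \<Rightarrow> 'f" and qo :: "'i \<Rightarrow> 'x" and qa :: "'u \<Rightarrow> 'f" +
  fixes \<alpha> :: "'i \<Rightarrow> 'f"
  assumes fibered_pullbacks: "fibered_pullbacks X B Po Pa"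
    and vertical_nat_trans: "vertical_nat_trans X B Po Pa po pa qo qa \<alpha>"
begin

lemma alpha_in_Ar [simp]: "I \<in> Ob B \<Longrightarrow> \<alpha> I \<in> Ar X"
  using vertical_nat_trans unfolding vertical_nat_trans_def hom_def by blast

lemma Dm_alpha [simp]: "I \<in> Ob B \<Longrightarrow> Dm X (\<alpha> I) = po I"
  using vertical_nat_trans unfolding vertical_nat_trans_def hom_def by blast

lemma Cd_alpha [simp]: "I \<in> Ob B \<Longrightarrow> Cd X (\<alpha> I) = qo I"
  using vertical_nat_trans unfolding vertical_nat_trans_def hom_def by blast

lemma Pa_alpha [simp]: "I \<in> Ob B \<Longrightarrow> Pa (\<alpha> I) = Idt B I"
  using vertical_nat_trans unfolding vertical_nat_trans_def hom_def by blast

lemma alpha_natural: "u \<in> Ar B \<Longrightarrow> Cp X (qa u) (\<alpha> (Dm B u)) = Cp X (\<alpha> (Cd B u)) (pa u)"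
  using vertical_nat_trans unfolding vertical_nat_trans_def by blast

lemma sigma_o_conv [simp]: "sigma_o X \<alpha> (I, x) = (I, Cp X (\<alpha> I) x)"
  by (simp add: sigma_o_def)

lemma sigma_a_conv [simp]:
  "sigma_a X \<alpha> ((I, x), (u, f), (J, y)) = ((I, Cp X (\<alpha> I) x), (u, f), (J, Cp X (\<alpha> J) y))"
  by (simp add: sigma_a_def)

lemma sigma_in_Ar:
  assumes m: "((I, x), (u, f), (J, y)) \<in> Ar p.S"
  shows "((I, Cp X (\<alpha> I) x), (u, f), (J, Cp X (\<alpha> J) y)) \<in> Ar q.S"
proof -
  have "Cp X (Cp X (\<alpha> J) y) f = Cp X (\<alpha> J) (Cp X (pa u) x)"
    using m by (simp flip: p.X.Cp_assoc)
  also have "\<dots> = Cp X (qa u) (Cp X (\<alpha> I) x)"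
    by (rule p.X.Cp_reassoc) (use m alpha_natural[of u] in simp_all)
  finally show ?thesis
    using m by simp
qed

lemma is_functor_sigma: "is_functor p.S q.S (sigma_o X \<alpha>) (sigma_a X \<alpha>)"
  unfolding is_functor_def
proof (intro conjI ballI impI p.is_category_slice q.is_category_slice)
  fix a assume "a \<in> Ob p.S"
  then show "sigma_o X \<alpha> a \<in> Ob q.S" "sigma_a X \<alpha> (Idt p.S a) = Idt q.S (sigma_o X \<alpha> a)"
    by (cases a, simp)+
next
  fix m assume "m \<in> Ar p.S"
  then show "sigma_a X \<alpha> m \<in> hom q.S (sigma_o X \<alpha> (Dm p.S m)) (sigma_o X \<alpha> (Cd p.S m))"
    by (cases m rule: slice_arrow_exhaust) (simp add: hom_def sigma_in_Ar del: q.slice_Ar_iff)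
next
  fix m n assume "m \<in> Ar p.S" "n \<in> Ar p.S" "Cd p.S m = Dm p.S n"
  then show "sigma_a X \<alpha> (Cp p.S n m) = Cp q.S (sigma_a X \<alpha> n) (sigma_a X \<alpha> m)"
    by (cases m rule: slice_arrow_exhaust, cases n rule: slice_arrow_exhaust) simp
qed

lemma fibered_functor_sigma:
  "fibered_functor B p.S slice_proj_o slice_proj_a q.S slice_proj_o slice_proj_a
     (sigma_o X \<alpha>) (sigma_a X \<alpha>)"
  unfolding fibered_functor_def
proof (intro conjI ballI impI p.is_fibration_slice q.is_fibration_slice is_functor_sigma)
  fix a assume "a \<in> Ob p.S"
  then show "slice_proj_o (sigma_o X \<alpha> a) = slice_proj_o a"
    by (cases a) simp
next
  fix m assume "m \<in> Ar p.S"
  then show "slice_proj_a (sigma_a X \<alpha> m) = slice_proj_a m"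
    by (cases m rule: slice_arrow_exhaust) simp
next
  fix m assume m: "m \<in> Ar p.S" and c: "cartesian p.S B slice_proj_o slice_proj_a m"
  obtain I x u f J y where mm: "m = ((I, x), (u, f), (J, y))"
    by (rule slice_arrow_exhaust)
  have mS: "((I, x), (u, f), (J, y)) \<in> Ar p.S"
    using m mm by simp
  then have "cartesian X B Po Pa f"
    using c mm p.cartesian_slice_iff[OF mS] by simp
  then show "cartesian q.S B slice_proj_o slice_proj_a (sigma_a X \<alpha> m)"
    using q.cartesian_slice_iff[OF sigma_in_Ar[OF mS]] mm by simp
qed

definition alpha_pullback :: "'i \<times> 'f \<Rightarrow> 'f \<times> 'f" where
  "alpha_pullback s = (SOME (f, x'). is_pullback (fiber X B Po Pa (fst s)) (snd s) (\<alpha> (fst s)) f x')"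

text \<open>
  For \<open>(J, y)\<close> in \<open>P/q\<close>, the chosen pullback square in the fiber is
  \<open>y \<circ> pb_fst (J, y) = \<alpha> J \<circ> pb_snd (J, y)\<close>; \<open>pb_snd (J, y)\<close> is the paper's \<open>x'\<close>.
\<close>

definition pb_fst :: "'i \<times> 'f \<Rightarrow> 'f" where
  "pb_fst s = fst (alpha_pullback s)"

definition pb_snd :: "'i \<times> 'f \<Rightarrow> 'f" where
  "pb_snd s = snd (alpha_pullback s)"

definition alpha_star_o :: "'i \<times> 'f \<Rightarrow> 'i \<times> 'f" where
  "alpha_star_o s = (fst s, pb_snd s)"

definition alpha_star_arrow :: "'i \<times> 'f \<Rightarrow> 'u \<Rightarrow> 'f \<Rightarrow> 'i \<times> 'f \<Rightarrow> 'f" where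
  "alpha_star_arrow s u g t =
     pullback_factor X (pb_fst t) (pb_snd t) (Cp X g (pb_fst s)) (Cp X (pa u) (pb_snd s))"

definition alpha_star_a ::
    "('i \<times> 'f) \<times> ('u \<times> 'f) \<times> ('i \<times> 'f) \<Rightarrow> ('i \<times> 'f) \<times> ('u \<times> 'f) \<times> ('i \<times> 'f)" where
  "alpha_star_a m =
     (case m of (s, (u, g), t) \<Rightarrow> (alpha_star_o s, (u, alpha_star_arrow s u g t), alpha_star_o t))"

lemma alpha_star_o_conv [simp]: "alpha_star_o (J, y) = (J, pb_snd (J, y))"
  by (simp add: alpha_star_o_def)

lemma alpha_star_a_conv [simp]:
  "alpha_star_a (s, (u, g), t) = (alpha_star_o s, (u, alpha_star_arrow s u g t), alpha_star_o t)"
  by (simp add: alpha_star_a_def)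

lemma fiber_pullback_pb:
  assumes "(J, y) \<in> Ob q.S"
  shows "is_pullback (fiber X B Po Pa J) y (\<alpha> J) (pb_fst (J, y)) (pb_snd (J, y))"
proof -
  have "has_pullbacks (fiber X B Po Pa J)"
    using fibered_pullbacks assms unfolding fibered_pullbacks_def by simp
  then have "\<exists>f x'. is_pullback (fiber X B Po Pa J) y (\<alpha> J) f x'"
    using assms unfolding has_pullbacks_def by simp
  then have "\<exists>p. case p of (f, x') \<Rightarrow> is_pullback (fiber X B Po Pa J) y (\<alpha> J) f x'"
    by auto
  then have "case SOME p. case p of (f, x') \<Rightarrow> is_pullback (fiber X B Po Pa J) y (\<alpha> J) f x'
      of (f, x') \<Rightarrow> is_pullback (fiber X B Po Pa J) y (\<alpha> J) f x'"
    by (rule someI_ex)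
  then show ?thesis
    by (simp add: pb_fst_def pb_snd_def alpha_pullback_def split: prod.splits)
qed

lemma pullback_pb:
  assumes "(J, y) \<in> Ob q.S"
  shows "is_pullback X y (\<alpha> J) (pb_fst (J, y)) (pb_snd (J, y))"
  using p.fiber_pullback_is_pullback[OF fibered_pullbacks _ fiber_pullback_pb] assms by simp

lemma pb_simps [simp]:
  assumes "(J, y) \<in> Ob q.S"
  shows "pb_fst (J, y) \<in> Ar X" "Pa (pb_fst (J, y)) = Idt B J" "Cd X (pb_fst (J, y)) = Dm X y"
    "pb_snd (J, y) \<in> Ar X" "Pa (pb_snd (J, y)) = Idt B J" "Cd X (pb_snd (J, y)) = po J"
    "Dm X (pb_snd (J, y)) = Dm X (pb_fst (J, y))"
  using pullbackD[OF fiber_pullback_pb[OF assms]] assms by simp_all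

lemma pb_commutes: "(J, y) \<in> Ob q.S \<Longrightarrow> Cp X y (pb_fst (J, y)) = Cp X (\<alpha> J) (pb_snd (J, y))"
  using pullbackD(9)[OF pullback_pb] by blast

lemma pb_arrow_eqI:
  assumes "(J, y) \<in> Ob q.S"
    and "l \<in> Ar X" "Cd X l = Dm X (pb_fst (J, y))"
    and "l' \<in> Ar X" "Dm X l = Dm X l'" "Cd X l' = Dm X (pb_fst (J, y))"
    and "Cp X (pb_fst (J, y)) l = Cp X (pb_fst (J, y)) l'"
    and "Cp X (pb_snd (J, y)) l = Cp X (pb_snd (J, y)) l'"
  shows "l = l'"
  by (rule p.X.pullback_arrow_eqI[OF pullback_pb[OF assms(1)]]) (use assms in simp_all)

lemma pb_factor:
  assumes "(J, y) \<in> Ob q.S"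
    and "h \<in> Ar X" "Cd X h = Dm X y" "k \<in> Ar X" "Cd X k = po J" "Dm X h = Dm X k"
    and "Cp X y h = Cp X (\<alpha> J) k"
  shows "pullback_factor X (pb_fst (J, y)) (pb_snd (J, y)) h k \<in> Ar X"
    "Dm X (pullback_factor X (pb_fst (J, y)) (pb_snd (J, y)) h k) = Dm X h"
    "Cd X (pullback_factor X (pb_fst (J, y)) (pb_snd (J, y)) h k) = Dm X (pb_fst (J, y))"
    "Cp X (pb_fst (J, y)) (pullback_factor X (pb_fst (J, y)) (pb_snd (J, y)) h k) = h"
    "Cp X (pb_snd (J, y)) (pullback_factor X (pb_fst (J, y)) (pb_snd (J, y)) h k) = k"
  using pullback_factor[OF pullback_pb[OF assms(1)]] assms by simp_all

lemma alpha_star_cone: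
  assumes m: "((I, x), (u, g), (J, y)) \<in> Ar q.S"
  shows "Cp X y (Cp X g (pb_fst (I, x))) = Cp X (\<alpha> J) (Cp X (pa u) (pb_snd (I, x)))"
proof -
  have "Cp X y (Cp X g (pb_fst (I, x))) = Cp X (qa u) (Cp X x (pb_fst (I, x)))"
    by (rule p.X.Cp_reassoc) (use m in simp_all)
  also have "\<dots> = Cp X (qa u) (Cp X (\<alpha> I) (pb_snd (I, x)))"
    using m by (simp add: pb_commutes)
  also have "\<dots> = Cp X (\<alpha> J) (Cp X (pa u) (pb_snd (I, x)))"
    by (rule p.X.Cp_reassoc) (use m alpha_natural[of u] in simp_all)
  finally show ?thesis .
qed

lemma alpha_star_arrow:
  assumes m: "((I, x), (u, g), (J, y)) \<in> Ar q.S"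
  shows "alpha_star_arrow (I, x) u g (J, y) \<in> Ar X"
    "Dm X (alpha_star_arrow (I, x) u g (J, y)) = Dm X (pb_fst (I, x))"
    "Cd X (alpha_star_arrow (I, x) u g (J, y)) = Dm X (pb_fst (J, y))"
    "Cp X (pb_fst (J, y)) (alpha_star_arrow (I, x) u g (J, y)) = Cp X g (pb_fst (I, x))"
    "Cp X (pb_snd (J, y)) (alpha_star_arrow (I, x) u g (J, y)) = Cp X (pa u) (pb_snd (I, x))"
proof -
  have "(J, y) \<in> Ob q.S" "Cp X g (pb_fst (I, x)) \<in> Ar X" "Cd X (Cp X g (pb_fst (I, x))) = Dm X y"
    "Cp X (pa u) (pb_snd (I, x)) \<in> Ar X" "Cd X (Cp X (pa u) (pb_snd (I, x))) = po J"
    "Dm X (Cp X g (pb_fst (I, x))) = Dm X (Cp X (pa u) (pb_snd (I, x)))"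
    using m by simp_all
  note factor = pb_factor[OF this alpha_star_cone[OF m]]
  then show "alpha_star_arrow (I, x) u g (J, y) \<in> Ar X"
    "Dm X (alpha_star_arrow (I, x) u g (J, y)) = Dm X (pb_fst (I, x))"
    "Cd X (alpha_star_arrow (I, x) u g (J, y)) = Dm X (pb_fst (J, y))"
    "Cp X (pb_fst (J, y)) (alpha_star_arrow (I, x) u g (J, y)) = Cp X g (pb_fst (I, x))"
    "Cp X (pb_snd (J, y)) (alpha_star_arrow (I, x) u g (J, y)) = Cp X (pa u) (pb_snd (I, x))"
    unfolding alpha_star_arrow_def using m by simp_all
qed

lemma alpha_star_in_Ar:
  assumes m: "((I, x), (u, g), (J, y)) \<in> Ar q.S"
  shows "((I, pb_snd (I, x)), (u, alpha_star_arrow (I, x) u g (J, y)), (J, pb_snd (J, y))) \<in> Ar p.S"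
  using alpha_star_arrow[OF m] m by simp

lemma Pa_alpha_star_arrow:
  assumes m: "((I, x), (u, g), (J, y)) \<in> Ar q.S"
  shows "Pa (alpha_star_arrow (I, x) u g (J, y)) = u"
  using alpha_star_in_Ar[OF m] by (rule p.slice_Ar_Pa)

lemma alpha_star_arrow_Idt:
  assumes "(I, x) \<in> Ob q.S"
  shows "alpha_star_arrow (I, x) (Idt B I) (Idt X (Dm X x)) (I, x) = Idt X (Dm X (pb_fst (I, x)))"
proof -
  have m: "((I, x), (Idt B I, Idt X (Dm X x)), (I, x)) \<in> Ar q.S"
    using assms by simp
  show ?thesis
    by (rule pb_arrow_eqI[OF assms]) (use assms alpha_star_arrow[OF m] in simp_all)
qed

lemma alpha_star_arrow_Cp:
  assumes m: "((I, x), (u, g), (J, y)) \<in> Ar q.S" and n: "((J, y), (v, h), (K, z)) \<in> Ar q.S"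
  shows "alpha_star_arrow (I, x) (Cp B v u) (Cp X h g) (K, z) =
    Cp X (alpha_star_arrow (J, y) v h (K, z)) (alpha_star_arrow (I, x) u g (J, y))"
proof -
  have nm: "((I, x), (Cp B v u, Cp X h g), (K, z)) \<in> Ar q.S"
    by (rule q.slice_Cp_in_Ar[OF m n])
  note km = alpha_star_arrow[OF m] and kn = alpha_star_arrow[OF n] and knm = alpha_star_arrow[OF nm]
  have "Cp X (pb_fst (K, z)) (Cp X (alpha_star_arrow (J, y) v h (K, z)) (alpha_star_arrow (I, x) u g (J, y))) =
      Cp X h (Cp X (pb_fst (J, y)) (alpha_star_arrow (I, x) u g (J, y)))"
    by (rule p.X.Cp_reassoc[OF kn(4)]) (use m n km kn in simp_all)
  also have "\<dots> = Cp X (Cp X h g) (pb_fst (I, x))"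
    using m n km by (simp add: p.X.Cp_assoc)
  finally have fst_eq: "Cp X (pb_fst (K, z))
      (Cp X (alpha_star_arrow (J, y) v h (K, z)) (alpha_star_arrow (I, x) u g (J, y))) =
      Cp X (pb_fst (K, z)) (alpha_star_arrow (I, x) (Cp B v u) (Cp X h g) (K, z))"
    using knm by simp
  have "Cp X (pb_snd (K, z)) (Cp X (alpha_star_arrow (J, y) v h (K, z)) (alpha_star_arrow (I, x) u g (J, y))) =
      Cp X (pa v) (Cp X (pb_snd (J, y)) (alpha_star_arrow (I, x) u g (J, y)))"
    by (rule p.X.Cp_reassoc[OF kn(5)]) (use m n km kn in simp_all)
  also have "\<dots> = Cp X (pa (Cp B v u)) (pb_snd (I, x))"
    using m n km by (simp add: p.X.Cp_assoc p.ra_Cp)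
  finally have snd_eq: "Cp X (pb_snd (K, z))
      (Cp X (alpha_star_arrow (J, y) v h (K, z)) (alpha_star_arrow (I, x) u g (J, y))) =
      Cp X (pb_snd (K, z)) (alpha_star_arrow (I, x) (Cp B v u) (Cp X h g) (K, z))"
    using knm by simp
  show ?thesis
    by (rule pb_arrow_eqI[OF _ _ _ _ _ _ fst_eq snd_eq, symmetric]) (use n km kn knm in simp_all)
qed

lemma is_functor_alpha_star: "is_functor q.S p.S alpha_star_o alpha_star_a"
  unfolding is_functor_def
proof (intro conjI ballI impI p.is_category_slice q.is_category_slice)
  fix a assume "a \<in> Ob q.S"
  then show "alpha_star_o a \<in> Ob p.S" "alpha_star_a (Idt q.S a) = Idt p.S (alpha_star_o a)"
    by (cases a, simp add: alpha_star_arrow_Idt)+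
next
  fix m assume "m \<in> Ar q.S"
  then show "alpha_star_a m \<in> hom p.S (alpha_star_o (Dm q.S m)) (alpha_star_o (Cd q.S m))"
    by (cases m rule: slice_arrow_exhaust)
      (simp add: hom_def alpha_star_in_Ar del: p.slice_Ar_iff)
next
  fix m n assume "m \<in> Ar q.S" "n \<in> Ar q.S" "Cd q.S m = Dm q.S n"
  then show "alpha_star_a (Cp q.S n m) = Cp p.S (alpha_star_a n) (alpha_star_a m)"
    by (cases m rule: slice_arrow_exhaust, cases n rule: slice_arrow_exhaust)
      (simp add: alpha_star_arrow_Cp del: q.slice_Ar_iff)
qed

lemma alpha_star_lift_cone:
  assumes m: "((I, x), (u, g), (J, y)) \<in> Ar q.S"
    and h: "h \<in> Ar X" "Cd X h = Dm X (pb_fst (J, y))"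
    and t: "t \<in> Ar X" "Cd X t = Dm X x" "Cp X g t = Cp X (pb_fst (J, y)) h"
    and s: "s \<in> Ar X" "Cd X s = po I" "Cp X (pa u) s = Cp X (pb_snd (J, y)) h"
    and ts: "Dm X t = Dm X s" "Pa t = Pa s"
  shows "Cp X x t = Cp X (\<alpha> I) s"
proof -
  have u: "u \<in> Ar B" and sJ: "(J, y) \<in> Ob q.S"
    using m by simp_all
  have "Cp X (qa u) (Cp X x t) = Cp X y (Cp X g t)"
    by (rule p.X.Cp_reassoc) (use m t in simp_all)
  also have "\<dots> = Cp X (\<alpha> J) (Cp X (pb_snd (J, y)) h)"
    using p.X.Cp_reassoc[OF pb_commutes[OF sJ]] m h t by simp
  also have "\<dots> = Cp X (\<alpha> J) (Cp X (pa u) s)"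
    using s(3) by simp
  also have "\<dots> = Cp X (qa u) (Cp X (\<alpha> I) s)"
    by (rule p.X.Cp_reassoc) (use m s alpha_natural[OF u] in simp_all)
  finally show ?thesis
    by (rule cartesian_cancel[OF p.is_functor q.cartesian_ra[OF u]]) (use m t s ts in simp_all)
qed

lemma alpha_star_arrow_lift:
  assumes m: "((I, x), (u, g), (J, y)) \<in> Ar q.S" and g: "cartesian X B Po Pa g"
    and w: "w \<in> Ar B" "Cd B w = I"
    and h: "h \<in> Ar X" "Cd X h = Dm X (pb_fst (J, y))" "Pa h = Cp B u w"
  shows "\<exists>l. l \<in> Ar X \<and> Dm X l = Dm X h \<and> Cd X l = Dm X (pb_fst (I, x)) \<and>
    Cp X (alpha_star_arrow (I, x) u g (J, y)) l = h \<and> Pa l = w"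
proof -
  note k = alpha_star_arrow[OF m]
  have u: "u \<in> Ar B" and sI: "(I, x) \<in> Ob q.S" and sJ: "(J, y) \<in> Ob q.S"
    using m by simp_all
  obtain t where t: "t \<in> Ar X" "Dm X t = Dm X h" "Cd X t = Dm X x"
    "Cp X g t = Cp X (pb_fst (J, y)) h" "Pa t = w"
    by (rule cartesian_factor[OF g w(1), of "Cp X (pb_fst (J, y)) h"])
      (use m h w q.slice_Ar_Pa[OF m] in simp_all)
  obtain s where s: "s \<in> Ar X" "Dm X s = Dm X h" "Cd X s = po I"
    "Cp X (pa u) s = Cp X (pb_snd (J, y)) h" "Pa s = w"
    by (rule cartesian_factor[OF p.cartesian_ra[OF u] w(1), of "Cp X (pb_snd (J, y)) h"])
      (use m h w in simp_all)
  have "Dm X t = Dm X s" "Cp X x t = Cp X (\<alpha> I) s"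
    using alpha_star_lift_cone[OF m h(1,2) t(1,3,4) s(1,3,4)] t s by simp_all
  note l = pb_factor[OF sI t(1,3) s(1,3) this]
  have "Cp X (alpha_star_arrow (I, x) u g (J, y)) (pullback_factor X (pb_fst (I, x)) (pb_snd (I, x)) t s) = h"
    by (rule pb_arrow_eqI[OF sJ])
      (use p.X.Cp_reassoc[OF k(4)] p.X.Cp_reassoc[OF k(5)] m k l h t s in simp_all)
  moreover have "Pa (Cp X (pb_fst (I, x)) (pullback_factor X (pb_fst (I, x)) (pb_snd (I, x)) t s)) =
      Pa (pullback_factor X (pb_fst (I, x)) (pb_snd (I, x)) t s)"
    using l(1,3) sI by simp
  ultimately show ?thesis
    using l t by (intro exI[of _ "pullback_factor X (pb_fst (I, x)) (pb_snd (I, x)) t s"]) simp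
qed

lemma alpha_star_arrow_cancel:
  assumes m: "((I, x), (u, g), (J, y)) \<in> Ar q.S" and g: "cartesian X B Po Pa g"
    and kl: "Cp X (alpha_star_arrow (I, x) u g (J, y)) l = Cp X (alpha_star_arrow (I, x) u g (J, y)) l'"
    and Pl: "Pa l = Pa l'"
    and l: "l \<in> Ar X" "Cd X l = Dm X (pb_fst (I, x))"
    and l': "l' \<in> Ar X" "Dm X l = Dm X l'" "Cd X l' = Dm X (pb_fst (I, x))"
  shows "l = l'"
proof -
  note k = alpha_star_arrow[OF m]
  have sI: "(I, x) \<in> Ob q.S" and u: "u \<in> Ar B"
    using m by simp_all
  have "Cp X g (Cp X (pb_fst (I, x)) l) = Cp X (pb_fst (J, y)) (Cp X (alpha_star_arrow (I, x) u g (J, y)) l)"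
    by (rule p.X.Cp_reassoc[OF k(4)[symmetric]]) (use m k l in simp_all)
  also have "\<dots> = Cp X g (Cp X (pb_fst (I, x)) l')"
    unfolding kl by (rule p.X.Cp_reassoc[OF k(4)]) (use m k l' in simp_all)
  finally have fst_eq: "Cp X (pb_fst (I, x)) l = Cp X (pb_fst (I, x)) l'"
    by (rule cartesian_cancel[OF p.is_functor g]) (use m l l' Pl in simp_all)
  have "Cp X (pa u) (Cp X (pb_snd (I, x)) l) = Cp X (pb_snd (J, y)) (Cp X (alpha_star_arrow (I, x) u g (J, y)) l)"
    by (rule p.X.Cp_reassoc[OF k(5)[symmetric]]) (use m k l in simp_all)
  also have "\<dots> = Cp X (pa u) (Cp X (pb_snd (I, x)) l')"
    unfolding kl by (rule p.X.Cp_reassoc[OF k(5)]) (use m k l' in simp_all)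
  finally have snd_eq: "Cp X (pb_snd (I, x)) l = Cp X (pb_snd (I, x)) l'"
    by (rule cartesian_cancel[OF p.is_functor p.cartesian_ra[OF u]]) (use m l l' Pl in simp_all)
  show "l = l'"
    by (rule pb_arrow_eqI[OF sI _ _ _ _ _ fst_eq snd_eq]) (use l l' in simp_all)
qed

lemma cartesian_alpha_star_arrow:
  assumes m: "((I, x), (u, g), (J, y)) \<in> Ar q.S" and g: "cartesian X B Po Pa g"
  shows "cartesian X B Po Pa (alpha_star_arrow (I, x) u g (J, y))"
  using alpha_star_arrow[OF m] Pa_alpha_star_arrow[OF m] m
    alpha_star_arrow_lift[OF m g] alpha_star_arrow_cancel[OF m g]
  by (intro cartesianI) simp_all

lemma fibered_functor_alpha_star:
  "fibered_functor B q.S slice_proj_o slice_proj_a p.S slice_proj_o slice_proj_a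
     alpha_star_o alpha_star_a"
  unfolding fibered_functor_def
proof (intro conjI ballI impI p.is_fibration_slice q.is_fibration_slice is_functor_alpha_star)
  fix a assume "a \<in> Ob q.S"
  then show "slice_proj_o (alpha_star_o a) = slice_proj_o a"
    by (cases a) simp
next
  fix m assume "m \<in> Ar q.S"
  then show "slice_proj_a (alpha_star_a m) = slice_proj_a m"
    by (cases m rule: slice_arrow_exhaust) simp
next
  fix m assume m: "m \<in> Ar q.S" and c: "cartesian q.S B slice_proj_o slice_proj_a m"
  obtain I x u g J y where mm: "m = ((I, x), (u, g), (J, y))"
    by (rule slice_arrow_exhaust)
  have mS: "((I, x), (u, g), (J, y)) \<in> Ar q.S"
    using m mm by simp
  moreover have "cartesian X B Po Pa g"
    using c mm q.cartesian_slice_iff[OF mS] by simp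
  ultimately have "cartesian X B Po Pa (alpha_star_arrow (I, x) u g (J, y))"
    by (rule cartesian_alpha_star_arrow)
  then show "cartesian p.S B slice_proj_o slice_proj_a (alpha_star_a m)"
    using p.cartesian_slice_iff[OF alpha_star_in_Ar[OF mS]] mm by simp
qed

lemma alpha_star_o_pullback:
  assumes "s \<in> Ob q.S"
  shows "\<exists>x' f. alpha_star_o s = (fst s, x') \<and>
    is_pullback (fiber X B Po Pa (fst s)) (snd s) (\<alpha> (fst s)) f x'"
proof (cases s)
  case (Pair J y)
  then show ?thesis
    using fiber_pullback_pb[of J y] assms by auto
qed

definition unit_arrow :: "'i \<Rightarrow> 'f \<Rightarrow> 'f" where
  "unit_arrow I x = pullback_factor X (pb_fst (I, Cp X (\<alpha> I) x)) (pb_snd (I, Cp X (\<alpha> I) x))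
     (Idt X (Dm X x)) x"

definition adj_unit :: "'i \<times> 'f \<Rightarrow> ('i \<times> 'f) \<times> ('u \<times> 'f) \<times> ('i \<times> 'f)" where
  "adj_unit a = (case a of (I, x) \<Rightarrow>
     ((I, x), (Idt B I, unit_arrow I x), (I, pb_snd (I, Cp X (\<alpha> I) x))))"

definition adj_counit :: "'i \<times> 'f \<Rightarrow> ('i \<times> 'f) \<times> ('u \<times> 'f) \<times> ('i \<times> 'f)" where
  "adj_counit b = (case b of (J, y) \<Rightarrow>
     ((J, Cp X (\<alpha> J) (pb_snd (J, y))), (Idt B J, pb_fst (J, y)), (J, y)))"

lemma adj_unit_conv [simp]:
  "adj_unit (I, x) = ((I, x), (Idt B I, unit_arrow I x), (I, pb_snd (I, Cp X (\<alpha> I) x)))"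
  by (simp add: adj_unit_def)

lemma adj_counit_conv [simp]:
  "adj_counit (J, y) = ((J, Cp X (\<alpha> J) (pb_snd (J, y))), (Idt B J, pb_fst (J, y)), (J, y))"
  by (simp add: adj_counit_def)

lemma unit_arrow:
  assumes "(I, x) \<in> Ob p.S"
  shows "unit_arrow I x \<in> Ar X" "Dm X (unit_arrow I x) = Dm X x"
    "Cd X (unit_arrow I x) = Dm X (pb_fst (I, Cp X (\<alpha> I) x))"
    "Cp X (pb_fst (I, Cp X (\<alpha> I) x)) (unit_arrow I x) = Idt X (Dm X x)"
    "Cp X (pb_snd (I, Cp X (\<alpha> I) x)) (unit_arrow I x) = x"
proof -
  have "(I, Cp X (\<alpha> I) x) \<in> Ob q.S" "Idt X (Dm X x) \<in> Ar X"
    "Cd X (Idt X (Dm X x)) = Dm X (Cp X (\<alpha> I) x)" "x \<in> Ar X" "Cd X x = po I"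
    "Dm X (Idt X (Dm X x)) = Dm X x" "Cp X (Cp X (\<alpha> I) x) (Idt X (Dm X x)) = Cp X (\<alpha> I) x"
    using assms by simp_all
  from pb_factor[OF this] show "unit_arrow I x \<in> Ar X" "Dm X (unit_arrow I x) = Dm X x"
    "Cd X (unit_arrow I x) = Dm X (pb_fst (I, Cp X (\<alpha> I) x))"
    "Cp X (pb_fst (I, Cp X (\<alpha> I) x)) (unit_arrow I x) = Idt X (Dm X x)"
    "Cp X (pb_snd (I, Cp X (\<alpha> I) x)) (unit_arrow I x) = x"
    unfolding unit_arrow_def using assms by simp_all
qed

lemma adj_unit_in_Ar:
  "(I, x) \<in> Ob p.S \<Longrightarrow>
    ((I, x), (Idt B I, unit_arrow I x), (I, pb_snd (I, Cp X (\<alpha> I) x))) \<in> Ar p.S"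
  using unit_arrow[of I x] by simp

lemma adj_counit_in_Ar:
  "(J, y) \<in> Ob q.S \<Longrightarrow>
    ((J, Cp X (\<alpha> J) (pb_snd (J, y))), (Idt B J, pb_fst (J, y)), (J, y)) \<in> Ar q.S"
  using pb_commutes[of J y] by simp

lemma alpha_star_arrow_unit_arrow:
  assumes m: "((I, x), (u, g), (J, y)) \<in> Ar p.S"
  shows "Cp X (alpha_star_arrow (I, Cp X (\<alpha> I) x) u g (J, Cp X (\<alpha> J) y)) (unit_arrow I x) =
    Cp X (unit_arrow J y) g"
proof -
  have mS: "((I, Cp X (\<alpha> I) x), (u, g), (J, Cp X (\<alpha> J) y)) \<in> Ar q.S"
    using m by (rule sigma_in_Ar)
  have sI: "(I, x) \<in> Ob p.S" and sJ: "(J, y) \<in> Ob p.S" and sJ': "(J, Cp X (\<alpha> J) y) \<in> Ob q.S"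
    using m mS by simp_all
  note k = alpha_star_arrow[OF mS] and \<eta>I = unit_arrow[OF sI] and \<eta>J = unit_arrow[OF sJ]
  show ?thesis
  proof (rule pb_arrow_eqI[OF sJ'])
    have "Cp X (pb_fst (J, Cp X (\<alpha> J) y))
        (Cp X (alpha_star_arrow (I, Cp X (\<alpha> I) x) u g (J, Cp X (\<alpha> J) y)) (unit_arrow I x)) = g"
      using p.X.Cp_reassoc[OF k(4)] m k \<eta>I by simp
    also have "\<dots> = Cp X (pb_fst (J, Cp X (\<alpha> J) y)) (Cp X (unit_arrow J y) g)"
      using m \<eta>J by (simp add: p.X.Cp_assoc)
    finally show "Cp X (pb_fst (J, Cp X (\<alpha> J) y))
        (Cp X (alpha_star_arrow (I, Cp X (\<alpha> I) x) u g (J, Cp X (\<alpha> J) y)) (unit_arrow I x)) =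
      Cp X (pb_fst (J, Cp X (\<alpha> J) y)) (Cp X (unit_arrow J y) g)" .
    have "Cp X (pb_snd (J, Cp X (\<alpha> J) y))
        (Cp X (alpha_star_arrow (I, Cp X (\<alpha> I) x) u g (J, Cp X (\<alpha> J) y)) (unit_arrow I x)) =
      Cp X (pa u) x"
      using p.X.Cp_reassoc[OF k(5)] m k \<eta>I by simp
    also have "\<dots> = Cp X (pb_snd (J, Cp X (\<alpha> J) y)) (Cp X (unit_arrow J y) g)"
      using m \<eta>J by (simp add: p.X.Cp_assoc)
    finally show "Cp X (pb_snd (J, Cp X (\<alpha> J) y))
        (Cp X (alpha_star_arrow (I, Cp X (\<alpha> I) x) u g (J, Cp X (\<alpha> J) y)) (unit_arrow I x)) =
      Cp X (pb_snd (J, Cp X (\<alpha> J) y)) (Cp X (unit_arrow J y) g)" .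
  qed (use m k \<eta>I \<eta>J in simp_all)
qed

lemma alpha_star_arrow_counit_unit:
  assumes sJ: "(J, y) \<in> Ob q.S"
  defines "y' \<equiv> pb_snd (J, y)"
  shows "Cp X (alpha_star_arrow (J, Cp X (\<alpha> J) y') (Idt B J) (pb_fst (J, y)) (J, y)) (unit_arrow J y') =
    Idt X (Dm X y')"
proof -
  have s': "(J, y') \<in> Ob p.S"
    using sJ by (simp add: y'_def)
  have e: "((J, Cp X (\<alpha> J) y'), (Idt B J, pb_fst (J, y)), (J, y)) \<in> Ar q.S"
    using adj_counit_in_Ar[OF sJ] unfolding y'_def .
  note k = alpha_star_arrow[OF e] and \<eta> = unit_arrow[OF s']
  show ?thesis
  proof (rule pb_arrow_eqI[OF sJ])
    show "Cp X (pb_fst (J, y))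
        (Cp X (alpha_star_arrow (J, Cp X (\<alpha> J) y') (Idt B J) (pb_fst (J, y)) (J, y)) (unit_arrow J y')) =
      Cp X (pb_fst (J, y)) (Idt X (Dm X y'))"
      using p.X.Cp_reassoc[OF k(4)] sJ k \<eta> by (simp add: y'_def)
    show "Cp X (pb_snd (J, y))
        (Cp X (alpha_star_arrow (J, Cp X (\<alpha> J) y') (Idt B J) (pb_fst (J, y)) (J, y)) (unit_arrow J y')) =
      Cp X (pb_snd (J, y)) (Idt X (Dm X y'))"
      using p.X.Cp_reassoc[OF k(5)] sJ k \<eta> by (simp add: y'_def)
  qed (use sJ k \<eta> in \<open>simp_all add: y'_def\<close>)
qed

lemma fibered_adjunction_sigma_alpha_star:
  "fibered_adjunction B p.S slice_proj_o slice_proj_a q.S slice_proj_o slice_proj_a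
     (sigma_o X \<alpha>) (sigma_a X \<alpha>) alpha_star_o alpha_star_a"
  unfolding fibered_adjunction_def
proof (intro conjI fibered_functor_sigma fibered_functor_alpha_star,
    rule exI[of _ adj_unit], rule exI[of _ adj_counit], intro conjI ballI)
  fix a assume "a \<in> Ob p.S"
  then show "adj_unit a \<in> hom p.S a (alpha_star_o (sigma_o X \<alpha> a))"
    by (cases a) (simp add: hom_def adj_unit_in_Ar del: p.slice_Ar_iff)
next
  fix a assume "a \<in> Ob p.S"
  then show "slice_proj_a (adj_unit a) = Idt B (slice_proj_o a)"
    by (cases a) simp
next
  fix m assume "m \<in> Ar p.S"
  then show "Cp p.S (alpha_star_a (sigma_a X \<alpha> m)) (adj_unit (Dm p.S m)) =
      Cp p.S (adj_unit (Cd p.S m)) m"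
    by (cases m rule: slice_arrow_exhaust) (simp add: alpha_star_arrow_unit_arrow)
next
  fix b assume "b \<in> Ob q.S"
  then show "adj_counit b \<in> hom q.S (sigma_o X \<alpha> (alpha_star_o b)) b"
    by (cases b) (simp add: hom_def adj_counit_in_Ar del: q.slice_Ar_iff)
next
  fix b assume "b \<in> Ob q.S"
  then show "slice_proj_a (adj_counit b) = Idt B (slice_proj_o b)"
    by (cases b) simp
next
  fix m assume "m \<in> Ar q.S"
  then show "Cp q.S m (adj_counit (Dm q.S m)) =
      Cp q.S (adj_counit (Cd q.S m)) (sigma_a X \<alpha> (alpha_star_a m))"
    by (cases m rule: slice_arrow_exhaust) (simp add: alpha_star_arrow)
next
  fix a assume "a \<in> Ob p.S"
  then show "Cp q.S (adj_counit (sigma_o X \<alpha> a)) (sigma_a X \<alpha> (adj_unit a)) =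
      Idt q.S (sigma_o X \<alpha> a)"
    by (cases a) (simp add: unit_arrow)
next
  fix b assume "b \<in> Ob q.S"
  then show "Cp p.S (alpha_star_a (adj_counit b)) (adj_unit (alpha_star_o b)) =
      Idt p.S (alpha_star_o b)"
    by (cases b) (simp add: alpha_star_arrow_counit_unit)
qed

end

theorem mainTheorem4:
  fixes X :: "('x, 'f) cat" and B :: "('i, 'u) cat"
    and Po :: "'x \<Rightarrow> 'i" and Pa :: "'f \<Rightarrow> 'u"
    and po qo :: "'i \<Rightarrow> 'x" and pa qa :: "'u \<Rightarrow> 'f"
    and \<alpha> :: "'i \<Rightarrow> 'f"
  assumes fib: "is_fibration X B Po Pa"
    and fpb: "fibered_pullbacks X B Po Pa"
    and pp: "is_pointed X B Po Pa po pa"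
    and pq: "is_pointed X B Po Pa qo qa"
    and nat: "vertical_nat_trans X B Po Pa po pa qo qa \<alpha>"
  shows
    "fibered_functor B (slice X B Po Pa po pa) slice_proj_o slice_proj_a
                       (slice X B Po Pa qo qa) slice_proj_o slice_proj_a
                       (sigma_o X \<alpha>) (sigma_a X \<alpha>)
     \<and> (\<exists>Fo Fa.
          (\<forall>s\<in>Ob (slice X B Po Pa qo qa).
              \<exists>x' f. Fo s = (fst s, x') \<and>
                     is_pullback (fiber X B Po Pa (fst s)) (snd s) (\<alpha> (fst s)) f x') \<and>
          fibered_functor B (slice X B Po Pa qo qa) slice_proj_o slice_proj_a
                            (slice X B Po Pa po pa) slice_proj_o slice_proj_a Fo Fa \<and>
          fibered_adjunction B (slice X B Po Pa po pa) slice_proj_o slice_proj_a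
                               (slice X B Po Pa qo qa) slice_proj_o slice_proj_a
                               (sigma_o X \<alpha>) (sigma_a X \<alpha>) Fo Fa)"
proof -
  interpret slice_base_change X B Po Pa po pa qo qa \<alpha>
    by (intro slice_base_change.intro pointed_fibration.intro fibration.intro
        pointed_fibration_axioms.intro slice_base_change_axioms.intro fib fpb pp pq nat)
  show ?thesis
    using fibered_functor_sigma alpha_star_o_pullback fibered_functor_alpha_star
      fibered_adjunction_sigma_alpha_star
    by (intro conjI exI[of _ alpha_star_o] exI[of _ alpha_star_a]) auto
qed

end
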